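(* Let $\mathcal K$ be a real Hilbert space, let $f\colon\mathcal K\to\,]-\infty,+\infty]$ be a proper lower semicontinuous convex function, let $\alpha,\beta\in\,]0,+\infty[$, let $B\colon\mathcal K\to\mathcal K$ be monotone and $\beta$-Lipschitzian, let $(\eta_n)_{n\in\mathbb N}$ be a summable sequence in $[0,+\infty[$, and let $(U_n)_{n\in\mathbb N}$ be a sequence in $\mathcal P_\alpha(\mathcal K)$ with $\mu=\sup_n\|U_n\|<+\infty$ and $(1+\eta_n)U_{n+1}\succcurlyeq U_n$ for all $n$. Let $x_0\in\mathcal K$, let $\varepsilon\in\,]0,\min\{1,1/(\mu\beta+1)\}[$, and let $(\gamma_n)_{n\in\mathbb N}$ be a sequence in $[\varepsilon,(1-\varepsilon)/(\beta\mu)]$. Suppose the variational inequality $$\text{find } \bar x\in\mathcal K \text{ such that } (\forall y\in\mathcal K)\ \ \langle \bar x-y, B\bar x\rangle+f(\bar x)\le f(y)$$ has at least one solution, and for every $n\in\mathbb N$ set $$y_n=x_n-\gamma_nU_nBx_n,\quad p_n=\operatorname*{argmin}_{x\in\mathcal K}\Big(f(x)+\tfrac{1}{2\gamma_n}\|x-y_n\|_{U_n^{-1}}^2\Big),\quad q_n=p_n-\gamma_nU_nBp_n,\quad x_{n+1}=x_n-y_n+q_n.$$ Then $(x_n)_{n\in\mathbb N}$ converges weakly to a solution of the variational inequality.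
   Context: $\mathcal P_\alpha(\mathcal K)=\{M\in\mathcal B(\mathcal K): M^*=M,\ \langle Mx,x\rangle\ge\alpha\|x\|^2\ \forall x\}$, where $\mathcal B(\mathcal K)$ denotes bounded linear operators on $\mathcal K$. For self-adjoint $M_1,M_2$, $M_1\succcurlyeq M_2$ means $\langle M_1x,x\rangle\ge\langle M_2x,x\rangle$ for all $x$. For $M\in\mathcal P_\alpha(\mathcal K)$, $\|x\|_M=\sqrt{\langle Mx,x\rangle}$. *)

theory Defs
  imports "HOL-Analysis.Analysis"
begin

text \<open>Functions into ]-\<infinity>,+\<infinity>] are modelled as functions into ereal never taking -\<infinity>.\<close>

definition proper_fun :: "('a \<Rightarrow> ereal) \<Rightarrow> bool" where
  "proper_fun f \<longleftrightarrow> (\<forall>x. f x \<noteq> -\<infinity>) \<and> (\<exists>x. f x \<noteq> \<infinity>)"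

definition lsc_fun :: "('a::topological_space \<Rightarrow> ereal) \<Rightarrow> bool" where
  "lsc_fun f \<longleftrightarrow> (\<forall>c::ereal. closed {x. f x \<le> c})"

definition convex_fun :: "('a::real_vector \<Rightarrow> ereal) \<Rightarrow> bool" where
  "convex_fun f \<longleftrightarrow> (\<forall>x y t. 0 \<le> t \<and> t \<le> 1 \<longrightarrow>
      f ((1 - t) *\<^sub>R x + t *\<^sub>R y) \<le> ereal (1 - t) * f x + ereal t * f y)"

definition monotone_op :: "('a::real_inner \<Rightarrow> 'a) \<Rightarrow> bool" where
  "monotone_op B \<longleftrightarrow> (\<forall>x y. inner (x - y) (B x - B y) \<ge> 0)"

definition P_alpha :: "real \<Rightarrow> ('a::real_inner \<Rightarrow> 'a) set" where
  "P_alpha \<alpha> = {M. bounded_linear M \<and> (\<forall>x y. inner (M x) y = inner x (M y))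
                   \<and> (\<forall>x. inner (M x) x \<ge> \<alpha> * (norm x)\<^sup>2)}"

definition loewner_ge :: "('a::real_inner \<Rightarrow> 'a) \<Rightarrow> ('a \<Rightarrow> 'a) \<Rightarrow> bool" where
  "loewner_ge M1 M2 \<longleftrightarrow> (\<forall>x. inner (M1 x) x \<ge> inner (M2 x) x)"

definition M_norm :: "('a::real_inner \<Rightarrow> 'a) \<Rightarrow> 'a \<Rightarrow> real" where
  "M_norm M x = sqrt (inner (M x) x)"

definition weakly_converges :: "(nat \<Rightarrow> 'a::real_inner) \<Rightarrow> 'a \<Rightarrow> bool" where
  "weakly_converges x l \<longleftrightarrow> (\<forall>y. (\<lambda>n. inner (x n) y) \<longlonglongrightarrow> inner l y)"

definition vi_solution :: "('a::real_inner \<Rightarrow> ereal) \<Rightarrow> ('a \<Rightarrow> 'a) \<Rightarrow> 'a \<Rightarrow> bool" where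
  "vi_solution f B xb \<longleftrightarrow> (\<forall>y. ereal (inner (xb - y) (B xb)) + f xb \<le> f y)"

end

theory Submission
  imports Defs "HOL-Library.Diagonal_Subsequence"
begin

(*
  The proof follows the classical quasi-Fejer route.  With W n = inv (U n) and the
  "metric distance" N n v = <W n v, v>, every solution z satisfies
      N (Suc n) (x (Suc n) - z) <= (1 + eta n) N n (x n - z) - (eps/mu) |x n - p n|^2,
  so N n (x n - z) converges and x n - p n -> 0.  The prox characterisation of p n
  together with monotonicity of B and weak lower semicontinuity of f then shows that
  every weak cluster point of (x n) solves the inequality (a Minty-type argument), and a
  variable-metric Opial lemma yields weak convergence of the whole sequence.
*)

section \<open>Minimisers of midpoint strongly convex functions\<close>

text \<open>If a is below every positive multiple t * b (t <= 1) then a is nonpositive; this is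
  how first-order optimality conditions are extracted from minimality.\<close>
lemma nonpos_if_le_scaled:
  fixes a b :: real
  assumes "\<And>t. 0 < t \<Longrightarrow> t \<le> 1 \<Longrightarrow> a \<le> t * b"
  shows "a \<le> 0"
proof (rule ccontr)
  assume "\<not> a \<le> 0"
  hence a: "a > 0" by simp
  have "a \<le> b" using assms[of 1] by simp
  hence b: "b > 0" using a by simp
  have "a \<le> (a / (2 * b)) * b"
    using assms[of "a / (2 * b)"] a b \<open>a \<le> b\<close> by (simp add: field_simps)
  also have "\<dots> = a / 2" using b by simp
  finally show False using a by simp
qed

text \<open>All objective functions minimised below (distance to a set, quadratic functionals,
  the proximal objective) have this property.\<close>
definition midpoint_strongly_convex :: "('a::real_normed_vector \<Rightarrow> ereal) \<Rightarrow> real \<Rightarrow> bool" where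
  "midpoint_strongly_convex g c \<longleftrightarrow> (\<forall>a b ra rb. g a = ereal ra \<longrightarrow> g b = ereal rb \<longrightarrow>
      g ((1/2) *\<^sub>R (a + b)) \<le> ereal ((ra + rb) / 2 - c * (norm (a - b))\<^sup>2))"

lemma one_over_Suc_tendsto_zero: "(\<lambda>k. 1 / (real k + 1)) \<longlonglongrightarrow> 0"
  using LIMSEQ_inverse_real_of_nat by (simp add: inverse_eq_divide add.commute)

lemma minimizing_sequence_Cauchy:
  fixes g :: "'a::real_normed_vector \<Rightarrow> ereal"
  assumes sc: "midpoint_strongly_convex g c" and c: "c > 0"
    and lower: "\<And>x. ereal i \<le> g x"
    and xs: "\<And>k. g (xs k) < ereal (i + \<delta> k)" and \<delta>: "\<delta> \<longlonglongrightarrow> 0"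
  shows "Cauchy xs"
proof -
  have "\<exists>r. g (xs k) = ereal r \<and> r < i + \<delta> k" for k
    using xs[of k] lower[of "xs k"] by (cases "g (xs k)") auto
  then obtain r where r: "\<And>k. g (xs k) = ereal (r k)" "\<And>k. r k < i + \<delta> k" by metis
  have close: "c * (norm (xs k - xs l))\<^sup>2 < (\<delta> k + \<delta> l) / 2" for k l
  proof -
    have "ereal i \<le> g ((1/2) *\<^sub>R (xs k + xs l))" by (rule lower)
    also have "\<dots> \<le> ereal ((r k + r l) / 2 - c * (norm (xs k - xs l))\<^sup>2)"
      using sc r(1) unfolding midpoint_strongly_convex_def by blast
    finally have "i \<le> (r k + r l) / 2 - c * (norm (xs k - xs l))\<^sup>2" by simp
    thus ?thesis using r(2)[of k] r(2)[of l] by (simp add: field_simps)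
  qed
  show ?thesis
  proof (rule metric_CauchyI)
    fix e :: real assume e: "e > 0"
    have "eventually (\<lambda>k. \<delta> k < c * e\<^sup>2) sequentially"
      using order_tendstoD(2)[OF \<delta>] c e by simp
    then obtain N where N: "\<And>k. k \<ge> N \<Longrightarrow> \<delta> k < c * e\<^sup>2"
      unfolding eventually_sequentially by blast
    have "dist (xs k) (xs l) < e" if "k \<ge> N" "l \<ge> N" for k l
    proof -
      have "c * (norm (xs k - xs l))\<^sup>2 < c * e\<^sup>2" using close[of k l] N[OF that(1)] N[OF that(2)] by (simp add: field_simps)
      hence "(norm (xs k - xs l))\<^sup>2 < e\<^sup>2" using c by simp
      hence "norm (xs k - xs l) < e" using e by (simp add: power_less_imp_less_base)
      thus ?thesis by (simp add: dist_norm)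
    qed
    thus "\<exists>M. \<forall>m\<ge>M. \<forall>n\<ge>M. dist (xs m) (xs n) < e" by blast
  qed
qed

lemma midpoint_strongly_convex_attains_min:
  fixes g :: "'a::{real_normed_vector,complete_space} \<Rightarrow> ereal"
  assumes lsc: "lsc_fun g" and lower: "\<And>x. ereal m \<le> g x" and finite: "\<exists>x. g x < \<infinity>"
    and sc: "midpoint_strongly_convex g c" and c: "c > 0"
  shows "\<exists>z. \<forall>x. g z \<le> g x"
proof -
  define I where "I = (INF x. g x)"
  have "ereal m \<le> I" unfolding I_def using lower by (simp add: le_INF_iff)
  moreover have "I < \<infinity>" using finite unfolding I_def by (metis INF_lower UNIV_I order.strict_trans1)
  ultimately obtain i where i: "I = ereal i" by (cases I) auto
  have lower_i: "ereal i \<le> g x" for x unfolding i[symmetric] I_def by (rule INF_lower) simp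
  have "\<exists>x. g x < ereal (i + 1 / (real k + 1))" for k
  proof -
    have "I < ereal (i + 1 / (real k + 1))" using i by simp
    thus ?thesis unfolding I_def by (simp add: INF_less_iff)
  qed
  then obtain xs where xs: "\<And>k. g (xs k) < ereal (i + 1 / (real k + 1))" by metis
  have "Cauchy xs" by (rule minimizing_sequence_Cauchy[OF sc c lower_i xs one_over_Suc_tendsto_zero])
  then obtain z where z: "xs \<longlonglongrightarrow> z" using Cauchy_convergent_iff convergent_def by blast
  have gz: "g z \<le> ereal (i + 1 / (real j + 1))" for j
  proof -
    have "g (xs (k + j)) \<le> ereal (i + 1 / (real j + 1))" for k
    proof -
      have "g (xs (k + j)) \<le> ereal (i + 1 / (real (k + j) + 1))" using xs less_imp_le by blast
      also have "\<dots> \<le> ereal (i + 1 / (real j + 1))" by (simp add: frac_le)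
      finally show ?thesis .
    qed
    moreover have "(\<lambda>k. xs (k + j)) \<longlonglongrightarrow> z" using z by (rule LIMSEQ_ignore_initial_segment)
    ultimately show ?thesis
      using lsc closed_sequentially[of "{x. g x \<le> ereal (i + 1 / (real j + 1))}" "\<lambda>k. xs (k + j)" z]
      unfolding lsc_fun_def by simp
  qed
  have "(\<lambda>j. ereal (i + 1 / (real j + 1))) \<longlonglongrightarrow> ereal i"
    using tendsto_ereal[OF tendsto_add[OF tendsto_const one_over_Suc_tendsto_zero, of i]] by simp
  hence "g z \<le> ereal i" by (rule LIMSEQ_le_const) (use gz in blast)
  thus ?thesis using lower_i order_trans by blast
qed

lemma lsc_fun_continuous:
  fixes \<phi> :: "'a::topological_space \<Rightarrow> real"
  assumes "continuous_on UNIV \<phi>"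
  shows "lsc_fun (\<lambda>x. ereal (\<phi> x))"
  unfolding lsc_fun_def
proof
  fix c :: ereal
  have "continuous_on UNIV (\<lambda>x. ereal (\<phi> x))" using assms by (intro continuous_on_ereal)
  thus "closed {x. ereal (\<phi> x) \<le> c}" using closed_Collect_le[of "\<lambda>x. ereal (\<phi> x)" "\<lambda>_. c"]
    by (simp add: continuous_on_const)
qed

section \<open>Projections and weak closedness in Hilbert space\<close>

lemma norm_midpoint_sq:
  fixes u v :: "'a::real_inner"
  shows "(norm ((1/2) *\<^sub>R (u + v)))\<^sup>2 = ((norm u)\<^sup>2 + (norm v)\<^sup>2) / 2 - (1/4) * (norm (v - u))\<^sup>2"
proof -
  have "(norm ((1/2) *\<^sub>R (u + v)))\<^sup>2 = (1/4) * (norm (u + v))\<^sup>2"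
    by (simp add: power_mult_distrib power_divide)
  also have "(norm (u + v))\<^sup>2 = (norm u)\<^sup>2 + 2 * inner u v + (norm v)\<^sup>2"
    by (simp add: power2_norm_eq_inner inner_add_left inner_add_right inner_commute)
  finally have "(norm ((1/2) *\<^sub>R (u + v)))\<^sup>2 = (1/4) * ((norm u)\<^sup>2 + 2 * inner u v + (norm v)\<^sup>2)" .
  moreover have "(norm (v - u))\<^sup>2 = (norm u)\<^sup>2 - 2 * inner u v + (norm v)\<^sup>2"
    by (simp add: power2_norm_eq_inner inner_diff_left inner_diff_right inner_commute)
  ultimately show ?thesis by (simp add: field_simps)
qed

lemma norm_diff_scaleR_sq:
  fixes a b :: "'a::real_inner"
  shows "(norm (a - t *\<^sub>R b))\<^sup>2 = (norm a)\<^sup>2 - 2 * t * inner a b + t\<^sup>2 * (norm b)\<^sup>2"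
  unfolding power2_norm_eq_inner
  by (simp add: inner_diff_left inner_diff_right inner_commute power2_eq_square algebra_simps)

lemma nearest_point_variational_ineq:
  fixes C :: "'a::real_inner set"
  assumes "convex C" "c \<in> C" "u \<in> C" and nearest: "\<And>v. v \<in> C \<Longrightarrow> norm (y - c) \<le> norm (y - v)"
  shows "inner (y - c) (u - c) \<le> 0"
proof -
  have "2 * inner (y - c) (u - c) \<le> t * (norm (u - c))\<^sup>2" if t: "0 < t" "t \<le> 1" for t
  proof -
    have "c + t *\<^sub>R (u - c) = (1 - t) *\<^sub>R c + t *\<^sub>R u" by (simp add: algebra_simps)
    also have "\<dots> \<in> C" by (rule convexD[OF assms(1-3)]) (use t in auto)
    finally have "(norm (y - c))\<^sup>2 \<le> (norm (y - (c + t *\<^sub>R (u - c))))\<^sup>2"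
      using nearest by (simp add: power_mono)
    also have "\<dots> = (norm (y - c))\<^sup>2 - 2 * t * inner (y - c) (u - c) + t\<^sup>2 * (norm (u - c))\<^sup>2"
      using norm_diff_scaleR_sq[of "y - c" t "u - c"] by (simp add: algebra_simps)
    finally have "t * (2 * inner (y - c) (u - c)) \<le> t * (t * (norm (u - c))\<^sup>2)"
      by (simp add: power2_eq_square)
    thus ?thesis using t by simp
  qed
  from nonpos_if_le_scaled[OF this] show ?thesis by simp
qed

lemma projection_exists:
  fixes C :: "'a::{real_inner,complete_space} set"
  assumes C: "closed C" "convex C" "C \<noteq> {}"
  shows "\<exists>c\<in>C. \<forall>u\<in>C. inner (y - c) (u - c) \<le> 0"
proof -
  define g where "g u = (if u \<in> C then ereal ((norm (y - u))\<^sup>2) else \<infinity>)" for u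
  have lsc: "lsc_fun g" unfolding lsc_fun_def
  proof
    fix c :: ereal
    show "closed {x. g x \<le> c}"
    proof (cases "c = \<infinity>")
      case False
      have "{x. g x \<le> c} = C \<inter> {x. ereal ((norm (y - x))\<^sup>2) \<le> c}"
        using False by (auto simp: g_def split: if_splits)
      moreover have "closed {x. ereal ((norm (y - x))\<^sup>2) \<le> c}"
        using lsc_fun_continuous[of "\<lambda>x. (norm (y - x))\<^sup>2"] unfolding lsc_fun_def
        by (simp add: continuous_intros)
      ultimately show ?thesis using C(1) by auto
    qed simp
  qed
  have sc: "midpoint_strongly_convex g (1/4)" unfolding midpoint_strongly_convex_def
  proof (intro allI impI)
    fix a b ra rb assume ga: "g a = ereal ra" and gb: "g b = ereal rb"
    hence ab: "a \<in> C" "b \<in> C" by (auto simp: g_def split: if_splits)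
    hence r: "ra = (norm (y - a))\<^sup>2" "rb = (norm (y - b))\<^sup>2" using ga gb by (auto simp: g_def)
    have "(1/2::real) *\<^sub>R a + (1/2::real) *\<^sub>R b \<in> C" by (rule convexD[OF C(2) ab]) auto
    hence m: "(1/2) *\<^sub>R (a + b) \<in> C" by (simp add: scaleR_add_right)
    have "y - (1/2) *\<^sub>R (a + b) = (1/2) *\<^sub>R ((y - a) + (y - b))"
      by (simp add: algebra_simps flip: scaleR_add_left)
    moreover have "a - b = (y - b) - (y - a)" by simp
    ultimately have "(norm (y - (1/2) *\<^sub>R (a + b)))\<^sup>2
        = ((norm (y - a))\<^sup>2 + (norm (y - b))\<^sup>2) / 2 - (1/4) * (norm (a - b))\<^sup>2"
      by (simp only: norm_midpoint_sq)
    thus "g ((1/2) *\<^sub>R (a + b)) \<le> ereal ((ra + rb) / 2 - (1/4) * (norm (a - b))\<^sup>2)"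
      using m r by (simp add: g_def)
  qed
  have "\<exists>x. g x < \<infinity>" using C(3) by (auto simp: g_def)
  then obtain c where c: "\<And>x. g c \<le> g x"
    using midpoint_strongly_convex_attains_min[OF lsc _ _ sc, of 0] by (force simp: g_def)
  obtain u0 where "u0 \<in> C" using C(3) by blast
  hence cC: "c \<in> C" using c[of u0] by (auto simp: g_def split: if_splits)
  have "norm (y - c) \<le> norm (y - v)" if "v \<in> C" for v
    using c[of v] cC that by (simp add: g_def power_mono_iff)
  thus ?thesis using nearest_point_variational_ineq[OF C(2) cC] cC by blast
qed

lemma weakly_closed:
  fixes C :: "'a::{real_inner,complete_space} set"
  assumes "closed C" "convex C" "\<And>k. u k \<in> C" "weakly_converges u z"
  shows "z \<in> C"
proof (rule ccontr)
  assume zC: "z \<notin> C"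
  have "C \<noteq> {}" using assms(3) by blast
  then obtain c where cC: "c \<in> C" and c: "\<And>v. v \<in> C \<Longrightarrow> inner (z - c) (v - c) \<le> 0"
    using projection_exists[OF assms(1,2)] by blast
  have "(\<lambda>k. inner (u k) (z - c)) \<longlonglongrightarrow> inner z (z - c)"
    using assms(4) unfolding weakly_converges_def by blast
  hence "(\<lambda>k. inner (u k) (z - c) - inner c (z - c)) \<longlonglongrightarrow> inner z (z - c) - inner c (z - c)"
    by (intro tendsto_diff tendsto_const)
  moreover have "inner (u k) (z - c) - inner c (z - c) \<le> 0" for k
    using c[OF assms(3)[of k]] by (simp add: inner_diff_left inner_diff_right inner_commute)
  ultimately have "inner z (z - c) - inner c (z - c) \<le> 0"
    by (intro LIMSEQ_le_const2) auto
  hence "inner (z - c) (z - c) \<le> 0" by (simp add: inner_diff_left)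
  hence "z = c" by (meson eq_iff_diff_eq_0 inner_eq_zero_iff inner_ge_zero order_antisym)
  thus False using zC cC by simp
qed

lemma weakly_converges_if_close:
  fixes u v :: "nat \<Rightarrow> 'a::real_inner"
  assumes u: "weakly_converges u z" and close: "(\<lambda>k. norm (u k - v k)) \<longlonglongrightarrow> 0"
  shows "weakly_converges v z"
  unfolding weakly_converges_def
proof
  fix h
  have "(\<lambda>k. inner (u k - v k) h) \<longlonglongrightarrow> 0"
  proof (rule Lim_null_comparison)
    show "\<forall>\<^sub>F k in sequentially. norm (inner (u k - v k) h) \<le> norm (u k - v k) * norm h"
      by (simp add: Cauchy_Schwarz_ineq2)
    show "(\<lambda>k. norm (u k - v k) * norm h) \<longlonglongrightarrow> 0" by (rule tendsto_mult_left_zero[OF close])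
  qed
  hence "(\<lambda>k. inner (u k) h - inner (u k - v k) h) \<longlonglongrightarrow> inner z h - 0"
    using u unfolding weakly_converges_def by (intro tendsto_diff) auto
  thus "(\<lambda>k. inner (v k) h) \<longlonglongrightarrow> inner z h" by (simp add: inner_diff_left)
qed

section \<open>Self-adjoint operators and quadratic forms\<close>

lemma quadratic_form_expand:
  fixes M :: "'a::real_inner \<Rightarrow> 'a"
  assumes lin: "linear M" and sa: "\<And>x y. inner (M x) y = inner x (M y)"
  shows "inner (M (a + t *\<^sub>R b)) (a + t *\<^sub>R b) = inner (M a) a + 2 * t * inner (M a) b + t\<^sup>2 * inner (M b) b"
proof -
  have "inner (M b) a = inner (M a) b" using sa[of b a] by (simp add: inner_commute)
  thus ?thesis
    by (simp add: linear_add[OF lin] linear_scale[OF lin] inner_add_left inner_add_right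
        power2_eq_square algebra_simps)
qed

lemma quadratic_form_midpoint:
  fixes M :: "'a::real_inner \<Rightarrow> 'a"
  assumes lin: "linear M" and sa: "\<And>x y. inner (M x) y = inner x (M y)"
  shows "inner (M ((1/2) *\<^sub>R (a + b))) ((1/2) *\<^sub>R (a + b)) =
     (inner (M a) a + inner (M b) b) / 2 - inner (M (a - b)) (a - b) / 4"
proof -
  have sym: "inner (M b) a = inner (M a) b" using sa[of b a] by (simp add: inner_commute)
  hence "inner (M (a - b)) (a - b) = inner (M a) a - 2 * inner (M a) b + inner (M b) b"
    by (simp add: linear_diff[OF lin] inner_diff_left inner_diff_right)
  moreover have "inner (M ((1/2) *\<^sub>R (a + b))) ((1/2) *\<^sub>R (a + b)) =
      (inner (M a) a + 2 * inner (M a) b + inner (M b) b) / 4"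
    using sym by (simp add: linear_add[OF lin] linear_scale[OF lin] inner_add_left inner_add_right;
        simp add: field_simps)
  ultimately show ?thesis by (simp add: field_simps)
qed

lemma nonneg_quadratic_discriminant:
  fixes a b c :: real
  assumes "a \<ge> 0" "c \<ge> 0" "\<And>s. 0 \<le> a + 2 * s * b + s\<^sup>2 * c"
  shows "b\<^sup>2 \<le> a * c"
proof (cases "c > 0")
  case True
  have "0 \<le> a + 2 * (-b/c) * b + (-b/c)\<^sup>2 * c" by (rule assms(3))
  also have "\<dots> = a - b\<^sup>2 / c" using True by (simp add: power2_eq_square field_simps)
  finally show ?thesis using True by (simp add: field_simps)
next
  case False
  hence c0: "c = 0" using assms(2) by simp
  show ?thesis
  proof (cases "b = 0")
    case False
    have "0 \<le> a + 2 * (-(a + 1) / (2 * b)) * b + (-(a + 1) / (2 * b))\<^sup>2 * c" by (rule assms(3))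
    also have "\<dots> = -1" using False c0 by (simp add: field_simps)
    finally show ?thesis by simp
  qed (use assms c0 in simp)
qed

lemma positive_operator_Cauchy_Schwarz:
  fixes T :: "'a::real_inner \<Rightarrow> 'a"
  assumes lin: "linear T" and sa: "\<And>x y. inner (T x) y = inner x (T y)"
    and pos: "\<And>x. inner (T x) x \<ge> 0"
  shows "(inner (T x) y)\<^sup>2 \<le> inner (T x) x * inner (T y) y"
proof (rule nonneg_quadratic_discriminant[OF pos pos])
  fix s :: real
  have "0 \<le> inner (T (x + s *\<^sub>R y)) (x + s *\<^sub>R y)" by (rule pos)
  thus "0 \<le> inner (T x) x + 2 * s * inner (T x) y + s\<^sup>2 * inner (T y) y"
    by (simp only: quadratic_form_expand[OF lin sa])
qed

lemma positive_operator_norm_sq_bound: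
  fixes T :: "'a::real_inner \<Rightarrow> 'a"
  assumes lin: "linear T" and sa: "\<And>x y. inner (T x) y = inner x (T y)"
    and pos: "\<And>x. inner (T x) x \<ge> 0" and K: "\<And>y. norm (T y) \<le> K * norm y"
  shows "(norm (T x))\<^sup>2 \<le> K * inner (T x) x"
proof -
  define n where "n = (norm (T x))\<^sup>2"
  define a where "a = inner (T x) x"
  have a0: "a \<ge> 0" unfolding a_def by (rule pos)
  have "n\<^sup>2 \<le> a * inner (T (T x)) (T x)"
    using positive_operator_Cauchy_Schwarz[OF lin sa pos, of x "T x"]
    unfolding n_def a_def by (simp add: power2_norm_eq_inner)
  also have "inner (T (T x)) (T x) \<le> K * n"
  proof -
    have "inner (T (T x)) (T x) \<le> norm (T (T x)) * norm (T x)" by (rule norm_cauchy_schwarz)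
    also have "\<dots> \<le> (K * norm (T x)) * norm (T x)" using K[of "T x"] by (simp add: mult_right_mono)
    finally show ?thesis unfolding n_def by (simp add: power2_eq_square mult.assoc)
  qed
  hence "a * inner (T (T x)) (T x) \<le> a * (K * n)" using a0 by (rule mult_left_mono)
  finally have h: "n * n \<le> (K * a) * n" by (simp add: power2_eq_square algebra_simps)
  have "n \<le> K * a"
  proof (cases "n = 0")
    case True
    have "0 \<le> K * a"
    proof (cases "x = 0")
      case True thus ?thesis unfolding a_def by (simp add: linear_0[OF lin])
    next
      case False
      have "0 \<le> K * norm x" using K[of x] norm_ge_zero order_trans by blast
      hence "K \<ge> 0" using False by (simp add: zero_le_mult_iff)
      thus ?thesis using a0 by simp
    qed
    thus ?thesis using True by simp
  next
    case False hence "n > 0" unfolding n_def by simp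
    thus ?thesis using h by simp
  qed
  thus ?thesis unfolding n_def a_def .
qed

section \<open>Riesz representation and weak compactness\<close>

lemma quadratic_functional_has_minimizer:
  fixes L :: "'a::{real_inner,complete_space} \<Rightarrow> real" and M :: "'a \<Rightarrow> 'a"
  assumes L: "bounded_linear L" and bd: "\<And>u. \<bar>L u\<bar> \<le> K * norm u"
    and Mbl: "bounded_linear M" and Msa: "\<And>x y. inner (M x) y = inner x (M y)"
    and Mco: "\<And>x. inner (M x) x \<ge> \<alpha> * (norm x)\<^sup>2" and \<alpha>: "\<alpha> > 0"
  shows "\<exists>z. \<forall>u. inner (M z) z / 2 - L z \<le> inner (M u) u / 2 - L u"
proof -
  define \<phi> where "\<phi> u = inner (M u) u / 2 - L u" for u
  have Mlin: "linear M" using Mbl by (rule bounded_linear.linear)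
  have cont: "continuous_on UNIV \<phi>" unfolding \<phi>_def
    by (intro continuous_intros linear_continuous_on[OF L] linear_continuous_on[OF Mbl]) auto
  have lower: "ereal (- (K * K) / (2 * \<alpha>)) \<le> ereal (\<phi> u)" for u
  proof -
    have "L u \<le> K * norm u" using bd[of u] by simp
    hence h1: "\<alpha> * L u \<le> \<alpha> * (K * norm u)" using \<alpha> by simp
    have "0 \<le> (\<alpha> * norm u - K)\<^sup>2" by simp
    hence h2: "2 * \<alpha> * (K * norm u) \<le> K * K + \<alpha> * (\<alpha> * (norm u)\<^sup>2)"
      by (simp add: power2_diff power2_eq_square algebra_simps)
    have "\<alpha> * (\<alpha> * (norm u)\<^sup>2) \<le> \<alpha> * inner (M u) u" using Mco[of u] \<alpha> by simp
    hence "2 * \<alpha> * L u \<le> K * K + \<alpha> * inner (M u) u" using h1 h2 by linarith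
    thus ?thesis using \<alpha> by (simp add: \<phi>_def field_simps)
  qed
  have sc: "midpoint_strongly_convex (\<lambda>u. ereal (\<phi> u)) (\<alpha> / 8)"
    unfolding midpoint_strongly_convex_def
  proof (intro allI impI)
    fix a b ra rb assume "ereal (\<phi> a) = ereal ra" "ereal (\<phi> b) = ereal rb"
    moreover have "L ((1/2) *\<^sub>R (a + b)) = (L a + L b) / 2"
      using linear_add[OF bounded_linear.linear[OF L]] linear_scale[OF bounded_linear.linear[OF L]]
      by simp
    hence "\<phi> ((1/2) *\<^sub>R (a + b)) = (\<phi> a + \<phi> b) / 2 - inner (M (a - b)) (a - b) / 8"
      unfolding \<phi>_def quadratic_form_midpoint[OF Mlin Msa] by (simp add: field_simps)
    moreover have "\<alpha> * (norm (a - b))\<^sup>2 \<le> inner (M (a - b)) (a - b)" by (rule Mco)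
    ultimately show "ereal (\<phi> ((1/2) *\<^sub>R (a + b))) \<le> ereal ((ra + rb) / 2 - \<alpha> / 8 * (norm (a - b))\<^sup>2)"
      by simp
  qed
  have "\<exists>z. \<forall>u. ereal (\<phi> z) \<le> ereal (\<phi> u)"
    by (rule midpoint_strongly_convex_attains_min[OF lsc_fun_continuous[OF cont] lower _ sc])
      (use \<alpha> in auto)
  thus ?thesis unfolding \<phi>_def by simp
qed

lemma lax_milgram:
  fixes L :: "'a::{real_inner,complete_space} \<Rightarrow> real" and M :: "'a \<Rightarrow> 'a"
  assumes L: "bounded_linear L" and bd: "\<And>u. \<bar>L u\<bar> \<le> K * norm u"
    and Mbl: "bounded_linear M" and Msa: "\<And>x y. inner (M x) y = inner x (M y)"
    and Mco: "\<And>x. inner (M x) x \<ge> \<alpha> * (norm x)\<^sup>2" and \<alpha>: "\<alpha> > 0"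
  shows "\<exists>z. \<forall>h. L h = inner (M z) h"
proof -
  have Mlin: "linear M" and Llin: "linear L" using Mbl L by (auto dest: bounded_linear.linear)
  obtain z where z: "\<And>u. inner (M z) z / 2 - L z \<le> inner (M u) u / 2 - L u"
    using quadratic_functional_has_minimizer[OF L bd Mbl Msa Mco \<alpha>] by blast
  have half: "L h \<le> inner (M z) h" for h
  proof -
    have "L h - inner (M z) h \<le> 0"
    proof (rule nonpos_if_le_scaled)
      fix t :: real assume t: "0 < t" "t \<le> 1"
      have "inner (M z) z / 2 - L z \<le> inner (M (z + t *\<^sub>R h)) (z + t *\<^sub>R h) / 2 - L (z + t *\<^sub>R h)"
        by (rule z)
      also have "\<dots> = inner (M z) z / 2 - L z + t * inner (M z) h + t\<^sup>2 * inner (M h) h / 2 - t * L h"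
        unfolding quadratic_form_expand[OF Mlin Msa] linear_add[OF Llin] linear_scale[OF Llin]
        by (simp add: field_simps)
      finally have "t * (L h - inner (M z) h) \<le> t * (t * (inner (M h) h / 2))"
        by (simp add: algebra_simps power2_eq_square)
      thus "L h - inner (M z) h \<le> t * (inner (M h) h / 2)" using t by simp
    qed
    thus ?thesis by simp
  qed
  have "L h = inner (M z) h" for h
    using half[of h] half[of "- h"] linear_neg[OF Llin, of h] by simp
  thus ?thesis by blast
qed

lemma riesz_representation:
  fixes L :: "'a::{real_inner,complete_space} \<Rightarrow> real"
  assumes "bounded_linear L" "\<And>u. \<bar>L u\<bar> \<le> K * norm u"
  shows "\<exists>z. \<forall>h. L h = inner z h"
  using lax_milgram[OF assms bounded_linear_ident, of 1] by (simp add: power2_norm_eq_inner)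

lemma diagonal_inner_convergent_subseq:
  fixes x :: "nat \<Rightarrow> 'a::real_inner"
  assumes M: "\<And>n. norm (x n) \<le> M"
  shows "\<exists>r. strict_mono r \<and> (\<forall>m. convergent (\<lambda>k. inner (x (r k)) (x m)))"
proof -
  interpret S: subseqs "\<lambda>m s. convergent (\<lambda>k. inner (x (s k)) (x m))"
  proof
    fix m and s :: "nat \<Rightarrow> nat"
    have "norm (inner (x (s k)) (x m)) \<le> M * M" for k
    proof -
      have "norm (inner (x (s k)) (x m)) \<le> norm (x (s k)) * norm (x m)"
        by (simp add: Cauchy_Schwarz_ineq2)
      also have "\<dots> \<le> M * M" using M by (meson mult_mono norm_ge_zero order_trans)
      finally show ?thesis .
    qed
    hence "bounded (range (\<lambda>k. inner (x (s k)) (x m)))" by (auto simp: bounded_iff)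
    then obtain l r' where "strict_mono r'" "((\<lambda>k. inner (x (s k)) (x m)) \<circ> r') \<longlonglongrightarrow> l"
      using bounded_imp_convergent_subsequence by blast
    thus "\<exists>r'. strict_mono r' \<and> convergent (\<lambda>k. inner (x ((s \<circ> r') k)) (x m))"
      by (auto simp: convergent_def o_def)
  qed
  have "convergent (\<lambda>k. inner (x (S.diagseq k)) (x m))" for m
  proof -
    have "convergent (\<lambda>k. inner (x ((S.diagseq \<circ> (+) (Suc m)) k)) (x m))"
    proof (rule S.diagseq_holds)
      fix r s :: "nat \<Rightarrow> nat" and n assume "strict_mono r" "convergent (\<lambda>k. inner (x (s k)) (x n))"
      thus "convergent (\<lambda>k. inner (x ((s \<circ> r) k)) (x n))"
        using LIMSEQ_subseq_LIMSEQ[of "\<lambda>k. inner (x (s k)) (x n)" _ r]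
        by (auto simp: convergent_def o_def)
    qed
    then obtain l where "(\<lambda>k. inner (x (S.diagseq (k + Suc m))) (x m)) \<longlonglongrightarrow> l"
      by (auto simp: convergent_def o_def add.commute)
    from LIMSEQ_offset[OF this] show ?thesis by (auto simp: convergent_def)
  qed
  thus ?thesis using S.subseq_diagseq by blast
qed

lemma subspace_convergent_inner: "subspace {v. convergent (\<lambda>k. inner (y k) v)}"
  unfolding subspace_def mem_Collect_eq
proof (intro conjI ballI allI)
  show "convergent (\<lambda>k. inner (y k) 0)" by (simp add: convergent_const)
next
  fix u v assume "u \<in> {v. convergent (\<lambda>k. inner (y k) v)}" "v \<in> {v. convergent (\<lambda>k. inner (y k) v)}"
  hence "convergent (\<lambda>k. inner (y k) u + inner (y k) v)" by (simp add: convergent_add)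
  thus "convergent (\<lambda>k. inner (y k) (u + v))" by (simp add: inner_add_right)
next
  fix c :: real and v assume "v \<in> {v. convergent (\<lambda>k. inner (y k) v)}"
  hence "convergent (\<lambda>k. c * inner (y k) v)" by (simp add: convergent_mult convergent_const)
  thus "convergent (\<lambda>k. inner (y k) (c *\<^sub>R v))" by simp
qed

lemma closed_convergent_inner:
  fixes y :: "nat \<Rightarrow> 'a::real_inner"
  assumes yM: "\<And>k. norm (y k) \<le> M"
  shows "closed {v. convergent (\<lambda>k. inner (y k) v)}"
  unfolding closed_sequential_limits
proof (intro allI impI, elim conjE)
  fix vs v assume vs: "\<forall>n. vs n \<in> {v. convergent (\<lambda>k. inner (y k) v)}" "vs \<longlonglongrightarrow> v"
  define M' where "M' = \<bar>M\<bar> + 1"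
  have M'pos: "M' > 0" unfolding M'_def by simp
  have yM': "norm (y k) \<le> M'" for k using yM[of k] unfolding M'_def by simp
  have "Cauchy (\<lambda>k. inner (y k) v)"
  proof (rule metric_CauchyI)
    fix e :: real assume e: "e > 0"
    have "e / (4 * M') > 0" using M'pos e by simp
    then obtain i where i: "norm (vs i - v) < e / (4 * M')"
      using vs(2) unfolding LIMSEQ_iff by blast
    have "Cauchy (\<lambda>k. inner (y k) (vs i))" using vs(1) by (simp add: convergent_Cauchy)
    then obtain N where N: "\<And>m n. m \<ge> N \<Longrightarrow> n \<ge> N \<Longrightarrow> dist (inner (y m) (vs i)) (inner (y n) (vs i)) < e/2"
      using e by (meson half_gt_zero metric_CauchyD)
    have "dist (inner (y m) v) (inner (y n) v) < e" if "m \<ge> N" "n \<ge> N" for m n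
    proof -
      have split: "inner (y m) v - inner (y n) v
          = (inner (y m) (vs i) - inner (y n) (vs i)) - inner (y m - y n) (vs i - v)"
        by (simp add: inner_diff_left inner_diff_right)
      have "\<bar>inner (y m - y n) (vs i - v)\<bar> \<le> norm (y m - y n) * norm (vs i - v)"
        by (rule Cauchy_Schwarz_ineq2)
      also have "\<dots> \<le> (2 * M') * norm (vs i - v)"
        using norm_triangle_ineq4[of "y m" "y n"] yM'[of m] yM'[of n] by (intro mult_right_mono) auto
      also have "\<dots> \<le> (2 * M') * (e / (4 * M'))" using i M'pos by (intro mult_left_mono) auto
      also have "\<dots> = e/2" using M'pos by simp
      finally have "\<bar>inner (y m - y n) (vs i - v)\<bar> \<le> e/2" .
      moreover have "\<bar>inner (y m) (vs i) - inner (y n) (vs i)\<bar> < e/2"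
        using N[OF that] by (simp add: dist_real_def)
      ultimately show ?thesis unfolding dist_real_def split by linarith
    qed
    thus "\<exists>N. \<forall>m\<ge>N. \<forall>n\<ge>N. dist (inner (y m) v) (inner (y n) v) < e" by blast
  qed
  thus "v \<in> {v. convergent (\<lambda>k. inner (y k) v)}" by (simp add: Cauchy_convergent_iff)
qed

lemma closure_span_add:
  fixes A :: "'a::real_normed_vector set"
  assumes "c \<in> closure (span A)" "w \<in> span A"
  shows "c + w \<in> closure (span A)"
proof -
  obtain s where s: "\<And>n. s n \<in> span A" "s \<longlonglongrightarrow> c"
    using assms(1) unfolding closure_sequential by blast
  have "(\<lambda>n. s n + w) \<longlonglongrightarrow> c + w" by (intro tendsto_add s(2) tendsto_const)
  moreover have "s n + w \<in> span A" for n using s(1) assms(2) by (rule span_add)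
  ultimately show ?thesis unfolding closure_sequential by (intro exI[of _ "\<lambda>n. s n + w"]) auto
qed

text \<open>A bounded sequence whose inner products against every vector converge is weakly
  convergent: the limit functional is represented by Riesz.\<close>
lemma weakly_convergent_if_inner_convergent:
  fixes y :: "nat \<Rightarrow> 'a::{real_inner,complete_space}"
  assumes yM: "\<And>k. norm (y k) \<le> M" and conv: "\<And>v. convergent (\<lambda>k. inner (y k) v)"
  shows "\<exists>z. weakly_converges y z"
proof -
  define L where "L v = lim (\<lambda>k. inner (y k) v)" for v
  have Lt: "(\<lambda>k. inner (y k) v) \<longlonglongrightarrow> L v" for v
    unfolding L_def using conv convergent_LIMSEQ_iff by blast
  have "L (u + v) = L u + L v" for u v
  proof -
    have "(\<lambda>k. inner (y k) (u + v)) \<longlonglongrightarrow> L u + L v"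
      unfolding inner_add_right by (intro tendsto_add Lt)
    thus ?thesis using Lt[of "u + v"] LIMSEQ_unique by blast
  qed
  moreover have "L (a *\<^sub>R u) = a * L u" for a u
  proof -
    have "(\<lambda>k. inner (y k) (a *\<^sub>R u)) \<longlonglongrightarrow> a * L u" by (simp, intro tendsto_mult tendsto_const Lt)
    thus ?thesis using Lt[of "a *\<^sub>R u"] LIMSEQ_unique by blast
  qed
  moreover have Lbd: "\<bar>L u\<bar> \<le> norm u * \<bar>M\<bar>" for u
  proof -
    have "\<bar>inner (y k) u\<bar> \<le> norm u * \<bar>M\<bar>" for k
    proof -
      have "\<bar>inner (y k) u\<bar> \<le> norm (y k) * norm u" by (rule Cauchy_Schwarz_ineq2)
      also have "\<dots> \<le> \<bar>M\<bar> * norm u" using yM[of k] by (intro mult_right_mono) auto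
      finally show ?thesis by (simp add: mult.commute)
    qed
    thus ?thesis using Lt[of u] by (intro LIMSEQ_le_const2[OF tendsto_rabs]) auto
  qed
  ultimately have "bounded_linear L" by (intro bounded_linear_intro[of L "\<bar>M\<bar>"]) auto
  then obtain z where z: "\<And>h. L h = inner z h"
    using riesz_representation[of L "\<bar>M\<bar>"] Lbd by (auto simp: mult.commute)
  have "weakly_converges y z" unfolding weakly_converges_def using Lt z by simp
  thus ?thesis by blast
qed

text \<open>On the closed span S of the sequence
  the inner products converge by the diagonal argument; an arbitrary v is reduced to its
  projection onto S, against which every member of the sequence has the same inner
  product.\<close>
lemma weakly_convergent_subsequence:
  fixes x :: "nat \<Rightarrow> 'a::{real_inner,complete_space}"
  assumes M: "\<And>n. norm (x n) \<le> M"
  shows "\<exists>r z. strict_mono r \<and> weakly_converges (x \<circ> r) z"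
proof -
  obtain r where r: "strict_mono r" "\<And>m. convergent (\<lambda>k. inner (x (r k)) (x m))"
    using diagonal_inner_convergent_subseq[of x M, OF M] by blast
  define y where "y k = x (r k)" for k
  define V where "V = {v. convergent (\<lambda>k. inner (y k) v)}"
  define S where "S = closure (span (range x))"
  have yM: "norm (y k) \<le> M" for k using M unfolding y_def by simp
  have "span (range x) \<subseteq> V"
    using r(2) subspace_convergent_inner unfolding V_def y_def by (intro span_minimal) auto
  hence SV: "S \<subseteq> V" unfolding S_def V_def
    by (rule closure_minimal[OF _ closed_convergent_inner[OF yM]])
  have S: "closed S" "convex S" "S \<noteq> {}" unfolding S_def
    using span_zero[of "range x"] by (auto intro: subspace_imp_convex)
  have yS: "y k \<in> span (range x)" for k unfolding y_def by (simp add: span_base)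
  have "convergent (\<lambda>k. inner (y k) v)" for v
  proof -
    obtain c where cS: "c \<in> S" and c: "\<And>u. u \<in> S \<Longrightarrow> inner (v - c) (u - c) \<le> 0"
      using projection_exists[OF S] by blast
    have "inner (y k) (v - c) = 0" for k
    proof -
      have "c + y k \<in> S" "c + - y k \<in> S"
        using closure_span_add[OF _ yS] closure_span_add[OF _ span_neg[OF yS]] cS
        unfolding S_def by blast+
      from c[OF this(1)] c[OF this(2)] show ?thesis by (simp add: inner_commute)
    qed
    hence "inner (y k) v = inner (y k) c" for k by (simp add: inner_diff_right)
    moreover have "convergent (\<lambda>k. inner (y k) c)" using SV cS unfolding V_def by auto
    ultimately show ?thesis by simp
  qed
  then obtain z where "weakly_converges y z" using weakly_convergent_if_inner_convergent[of y M, OF yM] by blast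
  thus ?thesis using r(1) unfolding y_def by (auto simp: o_def)
qed

section \<open>Operators in P_alpha and their inverses\<close>

context
  fixes M :: "'a::{real_inner,complete_space} \<Rightarrow> 'a" and \<alpha> :: real
  assumes MP: "M \<in> P_alpha \<alpha>" and \<alpha>: "\<alpha> > 0"
begin

lemma P_bounded_linear: "bounded_linear M" using MP unfolding P_alpha_def by blast

lemma P_linear: "linear M" using P_bounded_linear by (rule bounded_linear.linear)

lemma P_self_adjoint: "inner (M x) y = inner x (M y)" using MP unfolding P_alpha_def by blast

lemma P_coercive: "inner (M x) x \<ge> \<alpha> * (norm x)\<^sup>2" using MP unfolding P_alpha_def by blast

lemma P_nonneg: "inner (M x) x \<ge> 0"
  using P_coercive[of x] \<alpha> by (meson mult_nonneg_nonneg order_trans less_imp_le zero_le_power2)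

lemma P_norm_lower: "\<alpha> * norm x \<le> norm (M x)"
proof (cases "x = 0")
  case False
  have "\<alpha> * (norm x)\<^sup>2 \<le> inner (M x) x" by (rule P_coercive)
  also have "\<dots> \<le> norm (M x) * norm x" by (rule norm_cauchy_schwarz)
  finally have "(\<alpha> * norm x) * norm x \<le> norm (M x) * norm x" by (simp add: power2_eq_square mult.assoc)
  thus ?thesis using False by simp
qed (simp add: linear_0[OF P_linear])

lemma P_inj: "inj M"
proof (rule injI)
  fix x y assume "M x = M y"
  hence "\<alpha> * norm (x - y) \<le> 0" using P_norm_lower[of "x - y"] by (simp add: linear_diff[OF P_linear])
  thus "x = y" using \<alpha> by (simp add: mult_le_0_iff)
qed

text \<open>Surjectivity is Lax-Milgram applied to the functional <b, .>.\<close>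
lemma P_surj: "surj M"
proof -
  have "\<exists>z. M z = b" for b
  proof -
    obtain z where z: "\<And>h. inner b h = inner (M z) h"
      using lax_milgram[OF bounded_linear_inner_right _ P_bounded_linear P_self_adjoint P_coercive \<alpha>,
          of b "norm b"]
      by (auto simp: Cauchy_Schwarz_ineq2)
    have "inner (b - M z) (b - M z) = 0" using z[of "b - M z"] by (simp add: inner_diff_left)
    thus ?thesis by auto
  qed
  thus ?thesis by (metis surjI)
qed

lemma P_inv_right: "M (inv M y) = y" using P_surj by (simp add: surj_f_inv_f)

lemma P_inv_left: "inv M (M x) = x" using P_inj by simp

lemma P_inv_norm: "norm (inv M x) \<le> (1/\<alpha>) * norm x"
  using P_norm_lower[of "inv M x"] \<alpha> by (simp add: P_inv_right field_simps)

lemma P_inv_bounded_linear: "bounded_linear (inv M)"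
proof (rule bounded_linear_intro[where K="1/\<alpha>"])
  fix x y
  have "M (inv M x + inv M y) = x + y" by (simp add: linear_add[OF P_linear] P_inv_right)
  thus "inv M (x + y) = inv M x + inv M y" by (metis P_inv_left)
next
  fix r x
  have "M (r *\<^sub>R inv M x) = r *\<^sub>R x" by (simp add: linear_scale[OF P_linear] P_inv_right)
  thus "inv M (r *\<^sub>R x) = r *\<^sub>R inv M x" by (metis P_inv_left)
next
  fix x show "norm (inv M x) \<le> norm x * (1/\<alpha>)" using P_inv_norm[of x] by (simp add: mult.commute)
qed

lemma P_inv_linear: "linear (inv M)" using P_inv_bounded_linear by (rule bounded_linear.linear)

lemma P_inv_self_adjoint: "inner (inv M x) y = inner x (inv M y)"
  by (metis P_inv_right P_self_adjoint)

lemma P_inv_nonneg: "inner (inv M x) x \<ge> 0"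
  using P_nonneg[of "inv M x"] by (simp add: P_inv_right inner_commute)

lemma P_inv_lower: "(norm x)\<^sup>2 \<le> onorm M * inner (inv M x) x"
proof -
  have "(norm (M (inv M x)))\<^sup>2 \<le> onorm M * inner (M (inv M x)) (inv M x)"
    by (rule positive_operator_norm_sq_bound[OF P_linear P_self_adjoint P_nonneg])
      (rule onorm[OF P_bounded_linear])
  thus ?thesis by (simp add: P_inv_right inner_commute)
qed

end

lemma loewner_inverse_antimono:
  fixes A B WA WB :: "'a::real_inner \<Rightarrow> 'a"
  assumes Blin: "linear B" and Bsa: "\<And>x y. inner (B x) y = inner x (B y)"
    and Bpos: "\<And>x. inner (B x) x \<ge> 0"
    and AB: "\<And>u. inner (A u) u \<ge> inner (B u) u"
    and WA: "\<And>x. A (WA x) = x" and WB: "\<And>x. B (WB x) = x"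
    and WApos: "inner (WA x) x \<ge> 0"
  shows "inner (WA x) x \<le> inner (WB x) x"
proof -
  define u where "u = WA x"
  define v where "v = WB x"
  define a where "a = inner u x"
  define b where "b = inner v x"
  have a0: "a \<ge> 0" unfolding a_def u_def by (rule WApos)
  have b: "inner (B v) v = b" unfolding b_def v_def by (simp add: WB inner_commute)
  have "a = inner (B u) v" unfolding a_def v_def by (simp add: WB Bsa)
  hence "a\<^sup>2 \<le> inner (B u) u * b"
    using positive_operator_Cauchy_Schwarz[OF Blin Bsa Bpos, of u v] b by simp
  also have "inner (B u) u * b \<le> a * b"
    using AB[of u] Bpos[of v] b unfolding a_def u_def by (simp add: WA inner_commute mult_right_mono)
  finally have "a * a \<le> a * b" by (simp add: power2_eq_square)
  hence "a \<le> b" using a0 Bpos[of v] b by (cases "a = 0") simp_all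
  thus ?thesis unfolding a_def b_def u_def v_def .
qed

text \<open>For self-adjoint operators A >= B bounded by C, the difference A - B is a positive
  operator, so norm (A x - B x)^2 is controlled by the gap of the quadratic forms.\<close>
lemma operator_difference_bound:
  fixes A B :: "'a::real_inner \<Rightarrow> 'a"
  assumes lin: "linear A" "linear B"
    and sa: "\<And>u v. inner (A u) v = inner u (A v)" "\<And>u v. inner (B u) v = inner u (B v)"
    and le: "\<And>u. inner (B u) u \<le> inner (A u) u"
    and bd: "\<And>u. norm (A u) \<le> C * norm u" "\<And>u. norm (B u) \<le> C * norm u"
  shows "(norm (A x - B x))\<^sup>2 \<le> (2 * \<bar>C\<bar> + 1) * (inner (A x) x - inner (B x) x)"
proof -
  define T where "T u = A u - B u" for u
  have Tlin: "linear T" unfolding T_def using lin by (rule linear_compose_sub)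
  have Tsa: "inner (T u) v = inner u (T v)" for u v
    unfolding T_def using sa by (simp add: inner_diff_left inner_diff_right)
  have Tpos: "inner (T u) u \<ge> 0" for u unfolding T_def using le[of u] by (simp add: inner_diff_left)
  have Tbd: "norm (T u) \<le> (2 * \<bar>C\<bar> + 1) * norm u" for u
  proof -
    have "norm (T u) \<le> norm (A u) + norm (B u)" unfolding T_def by (rule norm_triangle_ineq4)
    also have "\<dots> \<le> (2 * C) * norm u" using bd(1)[of u] bd(2)[of u] by simp
    also have "\<dots> \<le> (2 * \<bar>C\<bar> + 1) * norm u" by (rule mult_right_mono) auto
    finally show ?thesis .
  qed
  show ?thesis
    using positive_operator_norm_sq_bound[OF Tlin Tsa Tpos Tbd, of x]
    unfolding T_def by (simp add: inner_diff_left)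
qed

text \<open>A decreasing sequence of uniformly bounded positive self-adjoint operators converges
  pointwise: the quadratic forms decrease to a limit, and by the previous lemma this makes
  (V n x) a Cauchy sequence.\<close>
lemma decreasing_operators_convergent:
  fixes V :: "nat \<Rightarrow> 'a::{real_inner,complete_space} \<Rightarrow> 'a"
  assumes bl: "\<And>n. bounded_linear (V n)" and sa: "\<And>n u v. inner (V n u) v = inner u (V n v)"
    and pos: "\<And>n u. inner (V n u) u \<ge> 0" and bd: "\<And>n y. norm (V n y) \<le> C * norm y"
    and dec: "\<And>n u. inner (V (Suc n) u) u \<le> inner (V n u) u"
  shows "convergent (\<lambda>n. V n x)"
proof -
  define q where "q n = inner (V n x) x" for n
  define K where "K = 2 * \<bar>C\<bar> + 1"
  have K: "K > 0" unfolding K_def by simp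
  have q_dec: "decseq q" unfolding q_def by (intro decseq_SucI dec)
  have gap: "(norm (V n x - V m x))\<^sup>2 \<le> K * (q n - q m)" if "n \<le> m" for n m
    unfolding K_def q_def
  proof (rule operator_difference_bound[OF bounded_linear.linear[OF bl] bounded_linear.linear[OF bl] sa sa _ bd bd])
    show "inner (V m u) u \<le> inner (V n u) u" for u
      using decseq_SucI[of "\<lambda>n. inner (V n u) u", OF dec] that by (simp add: decseq_def)
  qed
  have "norm (q n) \<le> q 0" for n
    using pos[of n x] q_dec unfolding q_def decseq_def by simp
  hence "Bseq q" by (rule BseqI')
  hence "Cauchy q" using Bseq_monoseq_convergent decseq_imp_monoseq[OF q_dec] convergent_Cauchy by blast
  have "Cauchy (\<lambda>n. V n x)"
  proof (rule metric_CauchyI)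
    fix e :: real assume e: "e > 0"
    obtain N where N: "\<And>m n. m \<ge> N \<Longrightarrow> n \<ge> N \<Longrightarrow> dist (q m) (q n) < e\<^sup>2 / K"
      using \<open>Cauchy q\<close> metric_CauchyD[of q "e\<^sup>2 / K"] e K by auto
    have close: "dist (V n x) (V m x) < e" if "n \<ge> N" "m \<ge> N" "n \<le> m" for n m
    proof -
      have "(norm (V n x - V m x))\<^sup>2 \<le> K * (q n - q m)" by (rule gap[OF that(3)])
      also have "\<dots> < K * (e\<^sup>2 / K)"
        using N[OF that(1,2)] K by (intro mult_strict_left_mono) (auto simp: dist_real_def)
      also have "\<dots> = e\<^sup>2" using K by simp
      finally have "norm (V n x - V m x) < e" using e by (simp add: power_less_imp_less_base)
      thus ?thesis by (simp add: dist_norm)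
    qed
    have "dist (V n x) (V m x) < e" if "n \<ge> N" "m \<ge> N" for n m
      using close[of n m] close[of m n] that by (cases "n \<le> m") (auto simp: dist_commute)
    thus "\<exists>N. \<forall>m\<ge>N. \<forall>n\<ge>N. dist (V m x) (V n x) < e" by blast
  qed
  thus ?thesis by (simp add: Cauchy_convergent_iff)
qed

section \<open>Quasi-Fejer sequences\<close>

context
  fixes \<eta> :: "nat \<Rightarrow> real"
  assumes \<eta>_nonneg: "\<And>n. \<eta> n \<ge> 0" and \<eta>_summable: "summable \<eta>"
begin

definition growth :: "nat \<Rightarrow> real" where "growth n = (\<Prod>k<n. 1 + \<eta> k)"

lemma growth_Suc: "growth (Suc n) = growth n * (1 + \<eta> n)" by (simp add: growth_def)

lemma growth_ge_1: "growth n \<ge> 1"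
  unfolding growth_def by (rule prod_ge_1) (use \<eta>_nonneg in auto)

lemma growth_pos: "growth n > 0" using growth_ge_1[of n] by simp

lemma growth_bounded: "growth n \<le> exp (suminf \<eta>)"
proof -
  have "growth n \<le> (\<Prod>k<n. exp (\<eta> k))"
    unfolding growth_def
    by (rule prod_mono) (use \<eta>_nonneg exp_ge_add_one_self in \<open>auto simp: add.commute\<close>)
  also have "\<dots> = exp (\<Sum>k<n. \<eta> k)" by (simp add: exp_sum)
  also have "\<dots> \<le> exp (suminf \<eta>)" using sum_le_suminf[OF \<eta>_summable, of "{..<n}"] \<eta>_nonneg by simp
  finally show ?thesis .
qed

lemma growth_convergent: "convergent growth"
proof -
  have "growth n \<le> growth (Suc n)" for n
    using growth_Suc[of n] growth_pos[of n] \<eta>_nonneg[of n] by (simp add: algebra_simps)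
  hence "incseq growth" by (rule incseq_SucI)
  moreover have "Bseq growth"
    by (rule BseqI'[where K="exp (suminf \<eta>)"]) (use growth_bounded growth_pos in \<open>simp add: less_imp_le\<close>)
  ultimately show ?thesis using Bseq_monoseq_convergent incseq_imp_monoseq by blast
qed

text \<open>Quasi-Fejer lemma: a_{n+1} <= (1 + eta n) a_n - c d_n with a, d >= 0 forces a to
  converge and d to be summable.  Dividing by growth makes the sequence decreasing.\<close>
lemma quasi_fejer_convergent:
  fixes a d :: "nat \<Rightarrow> real" and c :: real
  assumes c: "c > 0" and a0: "\<And>n. a n \<ge> 0" and d0: "\<And>n. d n \<ge> 0"
    and rec: "\<And>n. a (Suc n) \<le> (1 + \<eta> n) * a n - c * d n"
  shows "convergent a" "summable d"
proof -
  define P where "P = exp (suminf \<eta>)"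
  have P: "P > 0" unfolding P_def by simp
  define b where "b n = a n / growth n" for n
  have b0: "b n \<ge> 0" for n unfolding b_def using a0[of n] growth_pos[of n] by simp
  have step: "c * d n / P \<le> b n - b (Suc n)" for n
  proof -
    have "b (Suc n) \<le> ((1 + \<eta> n) * a n - c * d n) / growth (Suc n)"
      unfolding b_def using rec[of n] growth_pos[of "Suc n"] by (simp add: divide_right_mono)
    also have "\<dots> = b n - c * d n / growth (Suc n)"
    proof -
      have "1 + \<eta> n \<noteq> 0" using \<eta>_nonneg[of n] by simp
      thus ?thesis unfolding b_def growth_Suc by (simp add: diff_divide_distrib)
    qed
    finally have "c * d n / growth (Suc n) \<le> b n - b (Suc n)" by simp
    moreover have "c * d n / P \<le> c * d n / growth (Suc n)"
      using growth_bounded[of "Suc n"] growth_pos[of "Suc n"] c d0[of n] unfolding P_def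
      by (intro divide_left_mono) auto
    ultimately show ?thesis by simp
  qed
  have "decseq b"
    by (rule decseq_SucI) (use step c d0 P in \<open>smt (verit) divide_nonneg_pos mult_nonneg_nonneg\<close>)
  moreover have "Bseq b"
    by (rule BseqI'[where K="b 0"]) (use b0 \<open>decseq b\<close> in \<open>simp add: decseq_def\<close>)
  ultimately have "convergent b" using Bseq_monoseq_convergent decseq_imp_monoseq by blast
  moreover have "a = (\<lambda>n. growth n * b n)" unfolding b_def using growth_pos by (simp add: fun_eq_iff less_imp_neq[symmetric])
  ultimately show "convergent a" using growth_convergent by (simp add: convergent_mult)
  have "(\<Sum>k<n. c * d k / P) \<le> b 0" for n
  proof -
    have "(\<Sum>k<n. c * d k / P) \<le> (\<Sum>k<n. b k - b (Suc k))" by (rule sum_mono) (rule step)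
    also have "\<dots> = b 0 - b n" by (rule sum_lessThan_telescope')
    finally show ?thesis using b0[of n] by simp
  qed
  hence "summable (\<lambda>k. c * d k / P)"
    by (intro summableI_nonneg_bounded[where x="b 0"]) (use c d0 P in auto)
  hence "summable (\<lambda>k. (P / c) * (c * d k / P))" by (rule summable_mult)
  moreover have "(\<lambda>k. (P / c) * (c * d k / P)) = d" using c P by (auto simp: field_simps)
  ultimately show "summable d" by metis
qed

text \<open>Convergence of variable metrics: if positive self-adjoint uniformly bounded operators
  satisfy W (n+1) <= (1 + eta n) W n, then W n x converges for every x, because the
  rescaled operators W n / growth n decrease.\<close>
lemma variable_metric_convergent:
  fixes W :: "nat \<Rightarrow> 'a::{real_inner,complete_space} \<Rightarrow> 'a"
  assumes bl: "\<And>n. bounded_linear (W n)" and sa: "\<And>n x y. inner (W n x) y = inner x (W n y)"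
    and pos: "\<And>n x. inner (W n x) x \<ge> 0" and bd: "\<And>n y. norm (W n y) \<le> C * norm y"
    and mono: "\<And>n x. inner (W (Suc n) x) x \<le> (1 + \<eta> n) * inner (W n x) x"
  shows "convergent (\<lambda>n. W n x)"
proof -
  define V where "V n y = (1 / growth n) *\<^sub>R W n y" for n y
  have "convergent (\<lambda>n. V n x)"
  proof (rule decreasing_operators_convergent)
    show "bounded_linear (V n)" for n unfolding V_def by (intro bounded_linear_const_scaleR bl)
    show "inner (V n u) v = inner u (V n v)" for n u v unfolding V_def by (simp add: sa)
    show "inner (V n u) u \<ge> 0" for n u unfolding V_def using pos[of n u] growth_pos[of n] by simp
    show "norm (V n y) \<le> \<bar>C\<bar> * norm y" for n y
    proof -
      have "norm (V n y) \<le> norm (W n y)"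
        unfolding V_def using growth_ge_1[of n] by (simp add: divide_le_eq mult_le_cancel_left1)
      also have "\<dots> \<le> \<bar>C\<bar> * norm y" using bd[of n y] by (smt (verit) mult_right_mono norm_ge_zero)
      finally show ?thesis .
    qed
    show "inner (V (Suc n) u) u \<le> inner (V n u) u" for n u
    proof -
      have "inner (V (Suc n) u) u = inner (W (Suc n) u) u / growth (Suc n)" unfolding V_def by simp
      also have "\<dots> \<le> (1 + \<eta> n) * inner (W n u) u / growth (Suc n)"
        using mono[of n u] growth_pos[of "Suc n"] by (simp add: divide_right_mono)
      also have "\<dots> = inner (V n u) u"
        unfolding V_def growth_Suc using growth_pos[of n] \<eta>_nonneg[of n] by simp
      finally show ?thesis .
    qed
  qed
  then obtain l where l: "(\<lambda>n. V n x) \<longlonglongrightarrow> l" by (auto simp: convergent_def)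
  obtain P where P: "growth \<longlonglongrightarrow> P" using growth_convergent by (auto simp: convergent_def)
  have "(\<lambda>n. growth n *\<^sub>R V n x) \<longlonglongrightarrow> P *\<^sub>R l" by (intro tendsto_scaleR P l)
  moreover have "growth n *\<^sub>R V n x = W n x" for n unfolding V_def using growth_pos[of n] by simp
  ultimately show ?thesis by (auto simp: convergent_def)
qed

end

section \<open>Convex analysis: the proximal step\<close>

lemma ARG_MIN_minimal:
  fixes g :: "'a \<Rightarrow> 'b::linorder"
  assumes "\<exists>z. \<forall>x. g z \<le> g x"
  shows "g (ARG_MIN g z. True) \<le> g x"
proof -
  obtain z where z: "\<And>x. g z \<le> g x" using assms by blast
  show ?thesis
    by (rule arg_minI[where P="\<lambda>_. True" and f=g and x=z]) (use z in \<open>auto simp: not_less\<close>)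
qed

lemma convex_fun_real:
  assumes "convex_fun f" "f a = ereal ra" "f b = ereal rb" "0 \<le> t" "t \<le> 1"
  shows "f ((1 - t) *\<^sub>R a + t *\<^sub>R b) \<le> ereal ((1 - t) * ra + t * rb)"
proof -
  have "f ((1 - t) *\<^sub>R a + t *\<^sub>R b) \<le> ereal (1 - t) * f a + ereal t * f b"
    using assms(1,4,5) unfolding convex_fun_def by blast
  thus ?thesis using assms(2,3) by simp
qed

lemma proper_fun_real_value:
  assumes "proper_fun f" "f x \<noteq> \<infinity>"
  obtains r where "f x = ereal r"
  using assms unfolding proper_fun_def by (cases "f x") auto

lemma sublevel_convex:
  assumes "convex_fun f" "proper_fun f"
  shows "convex {v. f v \<le> ereal c}"
proof (rule convexI)
  fix a b :: 'a and u v :: real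
  assume a: "a \<in> {v. f v \<le> ereal c}" and b: "b \<in> {v. f v \<le> ereal c}"
    and u: "0 \<le> u" and v: "0 \<le> v" and uv: "u + v = 1"
  obtain ra rb where ra: "f a = ereal ra" and rb: "f b = ereal rb"
    using a b proper_fun_real_value[OF assms(2)] by (metis ereal_infty_less_eq(1) mem_Collect_eq)
  have "f ((1 - v) *\<^sub>R a + v *\<^sub>R b) \<le> ereal ((1 - v) * ra + v * rb)"
    by (rule convex_fun_real[OF assms(1) ra rb v]) (use u uv in auto)
  also have "(1 - v) * ra + v * rb \<le> (1 - v) * c + v * c"
    using a b ra rb u v uv by (intro add_mono mult_left_mono) auto
  finally have "f ((1 - v) *\<^sub>R a + v *\<^sub>R b) \<le> ereal c" by (simp add: algebra_simps)
  moreover have "1 - v = u" using uv by simp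
  ultimately show "u *\<^sub>R a + v *\<^sub>R b \<in> {v. f v \<le> ereal c}" by simp
qed

lemma lsc_fun_plus_continuous:
  fixes f :: "'a::real_normed_vector \<Rightarrow> ereal" and Q :: "'a \<Rightarrow> real"
  assumes lsc: "lsc_fun f" and pr: "\<And>x. f x \<noteq> -\<infinity>" and Q: "continuous_on UNIV Q"
  shows "lsc_fun (\<lambda>x. f x + ereal (Q x))"
  unfolding lsc_fun_def
proof
  fix c :: ereal
  show "closed {x. f x + ereal (Q x) \<le> c}"
  proof (cases c)
    case MInf
    have "{x. f x + ereal (Q x) \<le> c} = {}" using MInf pr by auto
    thus ?thesis by simp
  next
    case (real r)
    show ?thesis unfolding closed_sequential_limits
    proof (intro allI impI, elim conjE)
      fix zs z assume zs: "\<forall>n. zs n \<in> {x. f x + ereal (Q x) \<le> c}" "zs \<longlonglongrightarrow> z"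
      have Qt: "(\<lambda>n. Q (zs n)) \<longlonglongrightarrow> Q z"
        by (rule continuous_on_tendsto_compose[OF Q zs(2)]) auto
      have "f z \<le> ereal (r - Q z) + ereal \<delta>" if \<delta>: "\<delta> > 0" for \<delta>
      proof -
        obtain N where N: "\<And>n. n \<ge> N \<Longrightarrow> \<bar>Q (zs n) - Q z\<bar> < \<delta>"
          using Qt \<delta> unfolding LIMSEQ_iff by (auto simp: real_norm_def)
        have "f (zs (n + N)) \<le> ereal (r - Q z + \<delta>)" for n
        proof -
          have "f (zs (n + N)) + ereal (Q (zs (n + N))) \<le> ereal r" using zs(1) real by auto
          hence "f (zs (n + N)) \<le> ereal (r - Q (zs (n + N)))" by (cases "f (zs (n + N))") auto
          also have "r - Q (zs (n + N)) \<le> r - Q z + \<delta>" using N[of "n + N"] by simp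
          finally show ?thesis by simp
        qed
        moreover have "(\<lambda>n. zs (n + N)) \<longlonglongrightarrow> z" using zs(2) by (rule LIMSEQ_ignore_initial_segment)
        ultimately have "f z \<le> ereal (r - Q z + \<delta>)"
          using lsc closed_sequentially[of "{x. f x \<le> ereal (r - Q z + \<delta>)}" "\<lambda>n. zs (n + N)" z]
          unfolding lsc_fun_def by simp
        thus ?thesis by simp
      qed
      hence "f z \<le> ereal (r - Q z)" by (rule ereal_le_epsilon2)
      thus "z \<in> {x. f x + ereal (Q x) \<le> c}" using real pr[of z] by (cases "f z") auto
    qed
  qed simp
qed

lemma prox_objective_midpoint_strongly_convex:
  fixes f :: "'a::real_inner \<Rightarrow> ereal" and W :: "'a \<Rightarrow> 'a" and y :: 'a
  assumes f: "proper_fun f" "convex_fun f"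
    and Wlin: "linear W" and Wsa: "\<And>u v. inner (W u) v = inner u (W v)" and \<gamma>: "\<gamma> > 0"
    and Qlow: "\<And>u. c * (norm u)\<^sup>2 \<le> inner (W u) u / (2 * \<gamma>)"
  defines "Q \<equiv> \<lambda>z. inner (W (z - y)) (z - y) / (2 * \<gamma>)"
  shows "midpoint_strongly_convex (\<lambda>z. f z + ereal (Q z)) (c / 4)"
  unfolding midpoint_strongly_convex_def
proof (intro allI impI)
  fix a1 a2 r1 r2 assume g1: "f a1 + ereal (Q a1) = ereal r1" and g2: "f a2 + ereal (Q a2) = ereal r2"
  obtain s1 s2 where s1: "f a1 = ereal s1" and s2: "f a2 = ereal s2"
    using g1 g2 proper_fun_real_value[OF f(1)] by (metis PInfty_neq_ereal(1) plus_ereal.simps(2))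
  have r: "r1 = s1 + Q a1" "r2 = s2 + Q a2" using g1 g2 s1 s2 by simp_all
  have "f ((1 - 1/2) *\<^sub>R a1 + (1/2) *\<^sub>R a2) \<le> ereal ((1 - 1/2) * s1 + (1/2) * s2)"
    by (rule convex_fun_real[OF f(2) s1 s2]) auto
  hence fm: "f ((1/2) *\<^sub>R (a1 + a2)) \<le> ereal ((s1 + s2) / 2)"
    by (simp add: scaleR_add_right add_divide_distrib)
  have mid: "(1/2) *\<^sub>R (a1 + a2) - y = (1/2) *\<^sub>R ((a1 - y) + (a2 - y))"
    by (simp add: algebra_simps flip: scaleR_add_left)
  have "Q ((1/2) *\<^sub>R (a1 + a2)) = (Q a1 + Q a2) / 2 - inner (W (a1 - a2)) (a1 - a2) / (8 * \<gamma>)"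
    unfolding Q_def mid quadratic_form_midpoint[OF Wlin Wsa] using \<gamma> by (simp add: field_simps)
  also have "\<dots> \<le> (Q a1 + Q a2) / 2 - (c / 4) * (norm (a1 - a2))\<^sup>2"
    using Qlow[of "a1 - a2"] \<gamma> by (simp add: field_simps)
  finally have qm: "Q ((1/2) *\<^sub>R (a1 + a2)) \<le> (Q a1 + Q a2) / 2 - (c / 4) * (norm (a1 - a2))\<^sup>2" .
  have "f ((1/2) *\<^sub>R (a1 + a2)) + ereal (Q ((1/2) *\<^sub>R (a1 + a2)))
      \<le> ereal ((s1 + s2) / 2) + ereal ((Q a1 + Q a2) / 2 - (c / 4) * (norm (a1 - a2))\<^sup>2)"
    using fm qm by (intro add_mono) auto
  also have "\<dots> = ereal ((r1 + r2) / 2 - c / 4 * (norm (a1 - a2))\<^sup>2)"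
    unfolding r by (simp add: field_simps)
  finally show "f ((1/2) *\<^sub>R (a1 + a2)) + ereal (Q ((1/2) *\<^sub>R (a1 + a2)))
      \<le> ereal ((r1 + r2) / 2 - c / 4 * (norm (a1 - a2))\<^sup>2)" .
qed

lemma prox_objective_has_minimizer:
  fixes f :: "'a::{real_inner,complete_space} \<Rightarrow> ereal" and W :: "'a \<Rightarrow> 'a" and y :: 'a
  assumes f: "proper_fun f" "lsc_fun f" "convex_fun f"
    and minorant: "\<And>w. ereal (inner (xb - w) b) + f xb \<le> f w" and fxb: "f xb \<noteq> \<infinity>"
    and Wbl: "bounded_linear W" and Wsa: "\<And>u v. inner (W u) v = inner u (W v)"
    and Wlow: "\<And>u. (norm u)\<^sup>2 \<le> K * inner (W u) u" and K: "K > 0" and \<gamma>: "\<gamma> > 0"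
  defines "Q \<equiv> \<lambda>z. inner (W (z - y)) (z - y) / (2 * \<gamma>)"
  shows "\<exists>p. \<forall>z. f p + ereal (Q p) \<le> f z + ereal (Q z)"
proof -
  have fni: "f x \<noteq> -\<infinity>" for x using f(1) unfolding proper_fun_def by blast
  have Qcont: "continuous_on UNIV Q" unfolding Q_def
    by (intro continuous_intros bounded_linear.continuous_on[OF Wbl]) (use \<gamma> in auto)
  obtain fxr where fxr: "f xb = ereal fxr" using proper_fun_real_value[OF f(1) fxb] .
  define c where "c = 1 / (2 * \<gamma> * K)"
  have c: "c > 0" unfolding c_def using \<gamma> K by simp
  have Qlow: "c * (norm u)\<^sup>2 \<le> inner (W u) u / (2 * \<gamma>)" for u
    unfolding c_def using Wlow[of u] \<gamma> K by (simp add: field_simps)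
  define m where "m = fxr + inner (xb - y) b - (norm b)\<^sup>2 / (4 * c)"
  text \<open>Lower bound: the quadratic term dominates the affine minorant.\<close>
  have lower: "ereal m \<le> f z + ereal (Q z)" for z
  proof -
    have fz: "ereal (fxr + inner (xb - z) b) \<le> f z"
      using minorant[of z] fxr by (simp add: add.commute)
    have "inner (xb - z) b = inner (xb - y) b - inner (z - y) b" by (simp add: inner_diff_left)
    moreover have "inner (z - y) b \<le> norm (z - y) * norm b" by (rule norm_cauchy_schwarz)
    moreover have "0 \<le> (2 * c * norm (z - y) - norm b)\<^sup>2" by simp
    hence "norm (z - y) * norm b - (norm b)\<^sup>2 / (4 * c) \<le> c * (norm (z - y))\<^sup>2"
      using c by (simp add: power2_eq_square field_simps)
    ultimately have "m \<le> fxr + inner (xb - z) b + Q z" unfolding m_def Q_def using Qlow[of "z - y"] by linarith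
    hence "ereal m \<le> ereal (fxr + inner (xb - z) b) + ereal (Q z)" by simp
    also have "\<dots> \<le> f z + ereal (Q z)" using fz by (rule add_right_mono)
    finally show ?thesis .
  qed
  have sc: "midpoint_strongly_convex (\<lambda>z. f z + ereal (Q z)) (c / 4)"
    unfolding Q_def
    by (rule prox_objective_midpoint_strongly_convex[OF f(1,3) bounded_linear.linear[OF Wbl] Wsa \<gamma> Qlow])
  have "\<exists>x. f x + ereal (Q x) < \<infinity>" using fxr by (auto intro!: exI[of _ xb])
  thus ?thesis
    using midpoint_strongly_convex_attains_min[OF lsc_fun_plus_continuous[OF f(2) fni Qcont] lower _ sc] c
    by simp
qed

lemma prox_variational_ineq:
  fixes f :: "'a::real_inner \<Rightarrow> ereal" and W :: "'a \<Rightarrow> 'a" and y :: 'a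
  assumes f: "proper_fun f" "convex_fun f" and fp: "f p \<noteq> \<infinity>"
    and Wlin: "linear W" and Wsa: "\<And>u v. inner (W u) v = inner u (W v)" and \<gamma>: "\<gamma> > 0"
  defines "Q \<equiv> \<lambda>z. inner (W (z - y)) (z - y) / (2 * \<gamma>)"
  assumes pmin: "\<And>z. f p + ereal (Q p) \<le> f z + ereal (Q z)"
  shows "f p + ereal (inner ((1/\<gamma>) *\<^sub>R W (y - p)) (w - p)) \<le> f w"
proof (cases "f w = \<infinity>")
  case False
  obtain fp where fpr: "f p = ereal fp" using proper_fun_real_value[OF f(1) fp] .
  obtain fw where fwr: "f w = ereal fw" using proper_fun_real_value[OF f(1) False] .
  text \<open>Along the segment from p to w the objective grows at most linearly in t with
    slope fw - fp - <W (y - p), w - p> / gamma, up to a term of order t^2.\<close>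
  have Qline: "Q (p + t *\<^sub>R (w - p)) = Q p - t * inner (W (y - p)) (w - p) / \<gamma>
      + t\<^sup>2 * inner (W (w - p)) (w - p) / (2 * \<gamma>)" for t
  proof -
    have line: "p + t *\<^sub>R (w - p) - y = (p - y) + t *\<^sub>R (w - p)" by simp
    have flip: "inner (W (p - y)) (w - p) = - inner (W (y - p)) (w - p)"
      using linear_neg[OF Wlin, of "y - p"] by simp
    have "inner (W (p + t *\<^sub>R (w - p) - y)) (p + t *\<^sub>R (w - p) - y) = inner (W (p - y)) (p - y)
        - 2 * t * inner (W (y - p)) (w - p) + t\<^sup>2 * inner (W (w - p)) (w - p)"
      unfolding line quadratic_form_expand[OF Wlin Wsa] flip by simp
    thus ?thesis unfolding Q_def using \<gamma> by (simp add: field_simps)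
  qed
  have "fp - fw + inner (W (y - p)) (w - p) / \<gamma> \<le> 0"
  proof (rule nonpos_if_le_scaled)
    fix t :: real assume t: "0 < t" "t \<le> 1"
    have "(1 - t) *\<^sub>R p + t *\<^sub>R w = p + t *\<^sub>R (w - p)" by (simp add: algebra_simps)
    hence "f (p + t *\<^sub>R (w - p)) \<le> ereal ((1 - t) * fp + t * fw)"
      using convex_fun_real[OF f(2) fpr fwr, of t] t by simp
    hence "f p + ereal (Q p) \<le> ereal ((1 - t) * fp + t * fw) + ereal (Q (p + t *\<^sub>R (w - p)))"
      using pmin[of "p + t *\<^sub>R (w - p)"] by (meson add_right_mono order_trans)
    hence "fp + Q p \<le> (1 - t) * fp + t * fw + Q (p + t *\<^sub>R (w - p))" using fpr by simp
    hence "t * (fp - fw + inner (W (y - p)) (w - p) / \<gamma>)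
        \<le> t * (t * (inner (W (w - p)) (w - p) / (2 * \<gamma>)))"
      unfolding Qline using \<gamma> by (simp add: field_simps power2_eq_square)
    thus "fp - fw + inner (W (y - p)) (w - p) / \<gamma> \<le> t * (inner (W (w - p)) (w - p) / (2 * \<gamma>))"
      using mult_left_le_imp_le t(1) by blast
  qed
  thus ?thesis using fpr fwr by simp
qed (use fp f(1) in \<open>auto simp: proper_fun_def\<close>)

lemma prox_point:
  fixes f :: "'a::{real_inner,complete_space} \<Rightarrow> ereal" and M :: "'a \<Rightarrow> 'a"
  assumes f: "proper_fun f" "lsc_fun f" "convex_fun f"
    and minorant: "\<And>w. ereal (inner (xb - w) b) + f xb \<le> f w" and fxb: "f xb \<noteq> \<infinity>"
    and MP: "M \<in> P_alpha \<alpha>" and \<alpha>: "\<alpha> > 0" and \<gamma>: "\<gamma> > 0"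
    and p: "p = (ARG_MIN (\<lambda>z. f z + ereal (1 / (2 * \<gamma>) * (M_norm (inv M) (z - y))\<^sup>2)) z. True)"
  shows "f p \<noteq> \<infinity>" "f p + ereal (inner ((1/\<gamma>) *\<^sub>R inv M (y - p)) (w - p)) \<le> f w"
proof -
  define Q where "Q z = inner (inv M (z - y)) (z - y) / (2 * \<gamma>)" for z
  have obj: "(\<lambda>z. f z + ereal (1 / (2 * \<gamma>) * (M_norm (inv M) (z - y))\<^sup>2)) = (\<lambda>z. f z + ereal (Q z))"
    using P_inv_nonneg[OF MP \<alpha>] by (simp add: M_norm_def Q_def fun_eq_iff)
  have Wlow: "(norm u)\<^sup>2 \<le> (onorm M + 1) * inner (inv M u) u" for u
    using P_inv_lower[OF MP \<alpha>, of u] P_inv_nonneg[OF MP \<alpha>, of u] by (simp add: algebra_simps)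
  have "onorm M + 1 > 0" using onorm_pos_le[OF P_bounded_linear[OF MP \<alpha>]] by simp
  hence "\<exists>p. \<forall>z. f p + ereal (Q p) \<le> f z + ereal (Q z)"
    unfolding Q_def
    by (rule prox_objective_has_minimizer[OF f minorant fxb P_inv_bounded_linear[OF MP \<alpha>]
          P_inv_self_adjoint[OF MP \<alpha>] Wlow _ \<gamma>])
  hence pmin: "f p + ereal (Q p) \<le> f z + ereal (Q z)" for z
    unfolding p obj by (rule ARG_MIN_minimal)
  show fp: "f p \<noteq> \<infinity>" using pmin[of xb] fxb by auto
  show "f p + ereal (inner ((1/\<gamma>) *\<^sub>R inv M (y - p)) (w - p)) \<le> f w"
    by (rule prox_variational_ineq[OF f(1,3) fp P_inv_linear[OF MP \<alpha>] P_inv_self_adjoint[OF MP \<alpha>] \<gamma>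
          pmin[unfolded Q_def]])
qed

section \<open>Solutions of the variational inequality\<close>

lemma vi_solution_finite:
  assumes "proper_fun f" "vi_solution f B z"
  shows "f z \<noteq> \<infinity>"
proof
  assume inf: "f z = \<infinity>"
  obtain w where "f w \<noteq> \<infinity>" using assms(1) unfolding proper_fun_def by blast
  moreover have "ereal (inner (z - w) (B z)) + f z \<le> f w" using assms(2) unfolding vi_solution_def by blast
  ultimately show False using inf by simp
qed

text \<open>Weak sequential lower semicontinuity of a proper lsc convex function: its sublevel
  sets are closed and convex, hence weakly closed.\<close>
lemma weakly_lsc:
  fixes f :: "'a::{real_inner,complete_space} \<Rightarrow> ereal"
  assumes f: "proper_fun f" "lsc_fun f" "convex_fun f"
    and wz: "weakly_converges u z" and s: "s \<longlonglongrightarrow> R" and le: "\<And>k. f (u k) \<le> ereal (s k)"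
  shows "f z \<le> ereal R"
proof (rule ereal_le_epsilon2)
  fix \<delta> :: real assume \<delta>: "\<delta> > 0"
  obtain N where N: "\<And>k. k \<ge> N \<Longrightarrow> \<bar>s k - R\<bar> < \<delta>"
    using s \<delta> unfolding LIMSEQ_iff by (auto simp: real_norm_def)
  define C where "C = {v. f v \<le> ereal (R + \<delta>)}"
  have "closed C" unfolding C_def using f(2) unfolding lsc_fun_def by blast
  moreover have "convex C" unfolding C_def by (rule sublevel_convex[OF f(3) f(1)])
  moreover have "u (k + N) \<in> C" for k
  proof -
    have "f (u (k + N)) \<le> ereal (s (k + N))" by (rule le)
    also have "s (k + N) \<le> R + \<delta>" using N[of "k + N"] by simp
    finally show ?thesis unfolding C_def by simp
  qed
  moreover have "weakly_converges (\<lambda>k. u (k + N)) z"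
    using wz unfolding weakly_converges_def by (intro allI) (rule LIMSEQ_ignore_initial_segment, blast)
  ultimately have "z \<in> C" by (rule weakly_closed)
  thus "f z \<le> ereal R + ereal \<delta>" unfolding C_def by simp
qed

text \<open>Minty's lemma: for B continuous (here Lipschitz), the "dual" inequality
  f z <= f w + <B w, w - z> for all w implies that z solves the variational inequality;
  apply it at w_t = z + t (w - z) and let t -> 0.\<close>
lemma vi_solution_if_minty:
  fixes f :: "'a::real_inner \<Rightarrow> ereal"
  assumes f: "proper_fun f" "convex_fun f"
    and Blip: "\<And>u v. norm (B u - B v) \<le> \<beta> * norm (u - v)"
    and minty: "\<And>w fw. f w = ereal fw \<Longrightarrow> f z \<le> ereal (fw + inner (B w) (w - z))"
    and fz: "f z = ereal fzr"
  shows "vi_solution f B z"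
  unfolding vi_solution_def
proof
  fix w
  show "ereal (inner (z - w) (B z)) + f z \<le> f w"
  proof (cases "f w = \<infinity>")
    case False
    then obtain fw where fw: "f w = ereal fw" using proper_fun_real_value[OF f(1)] by blast
    define wt where "wt k = z + (1 / (real k + 1)) *\<^sub>R (w - z)" for k
    have ineq: "fzr - fw \<le> inner (B (wt k)) (w - z)" for k
    proof -
      define t where "t = 1 / (real k + 1)"
      have t: "0 < t" "t \<le> 1" unfolding t_def by (auto simp: field_simps)
      have "wt k = (1 - t) *\<^sub>R z + t *\<^sub>R w" unfolding wt_def t_def by (simp add: algebra_simps)
      hence fwt: "f (wt k) \<le> ereal ((1 - t) * fzr + t * fw)"
        using convex_fun_real[OF f(2) fz fw, of t] t by simp
      then obtain fwt where fwtr: "f (wt k) = ereal fwt"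
        using proper_fun_real_value[OF f(1)] by (metis PInfty_neq_ereal(1) ereal_infty_less_eq(1))
      have "fzr \<le> fwt + inner (B (wt k)) (wt k - z)" using minty[OF fwtr] fz by simp
      moreover have "wt k - z = t *\<^sub>R (w - z)" unfolding wt_def t_def by simp
      moreover have "fwt \<le> (1 - t) * fzr + t * fw" using fwt fwtr by simp
      ultimately have "t * (fzr - fw) \<le> t * inner (B (wt k)) (w - z)" by (simp add: algebra_simps)
      thus ?thesis using t by simp
    qed
    have "(\<lambda>k. (1 / (real k + 1)) *\<^sub>R (w - z)) \<longlonglongrightarrow> 0"
      using tendsto_scaleR[OF one_over_Suc_tendsto_zero tendsto_const[of "w - z"]] by simp
    hence "(\<lambda>k. \<beta> * norm (wt k - z)) \<longlonglongrightarrow> 0"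
      unfolding wt_def by (intro tendsto_mult_right_zero tendsto_norm_zero) simp
    hence "(\<lambda>k. B (wt k) - B z) \<longlonglongrightarrow> 0"
      by (rule Lim_null_comparison[rotated]) (simp add: Blip)
    hence "(\<lambda>k. B (wt k)) \<longlonglongrightarrow> B z" by (simp add: LIM_zero_iff)
    hence "(\<lambda>k. inner (B (wt k)) (w - z)) \<longlonglongrightarrow> inner (B z) (w - z)" by (intro tendsto_intros)
    hence "fzr - fw \<le> inner (B z) (w - z)" using ineq by (intro LIMSEQ_le_const) auto
    hence "inner (z - w) (B z) + fzr \<le> fw" by (simp add: inner_diff_left inner_diff_right inner_commute)
    thus ?thesis using fz fw by simp
  qed (use fz in simp)
qed

section \<open>A variable-metric Opial lemma\<close>

text \<open>A bounded sequence all of whose weakly convergent subsequences have the same limit z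
  converges weakly to z: otherwise some subsequence stays away from z in one direction h,
  and a weakly convergent subsequence of it would contradict uniqueness.\<close>
lemma weakly_converges_if_unique_cluster:
  fixes x :: "nat \<Rightarrow> 'a::{real_inner,complete_space}"
  assumes M: "\<And>n. norm (x n) \<le> M"
    and unique: "\<And>r z'. strict_mono r \<Longrightarrow> weakly_converges (x \<circ> r) z' \<Longrightarrow> z' = z"
  shows "weakly_converges x z"
  unfolding weakly_converges_def
proof (rule allI, rule ccontr)
  fix h assume "\<not> (\<lambda>n. inner (x n) h) \<longlonglongrightarrow> inner z h"
  hence "\<not> (\<forall>e>0. \<exists>N. \<forall>n\<ge>N. norm (inner (x n) h - inner z h) < e)"
    unfolding LIMSEQ_iff by assumption
  then obtain e :: real where e: "e > 0"
    and far: "\<not> (\<exists>N::nat. \<forall>n\<ge>N. norm (inner (x n) h - inner z h) < e)"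
    by blast
  define S where "S = {n. e \<le> \<bar>inner (x n) h - inner z h\<bar>}"
  have "infinite S" unfolding infinite_nat_iff_unbounded_le S_def using far by (auto simp: not_less)
  then obtain s :: "nat \<Rightarrow> nat" where s: "strict_mono s" "\<And>k. s k \<in> S"
    using infinite_enumerate by blast
  obtain r z' where r: "strict_mono r" and wz': "weakly_converges ((x \<circ> s) \<circ> r) z'"
    using weakly_convergent_subsequence[of "x \<circ> s" M] M by auto
  have "z' = z" using unique[OF strict_mono_o[OF s(1) r]] wz' by (simp add: o_assoc)
  hence "(\<lambda>k. inner (x (s (r k))) h) \<longlonglongrightarrow> inner z h"
    using wz' unfolding weakly_converges_def by (simp add: o_def)
  then obtain N where "\<And>k. k \<ge> N \<Longrightarrow> norm (inner (x (s (r k))) h - inner z h) < e"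
    using e unfolding LIMSEQ_iff by blast
  thus False using s(2)[of "r N"] unfolding S_def by fastforce
qed

lemma bounded_if_metric_distance_convergent:
  fixes x :: "nat \<Rightarrow> 'a::real_inner" and W :: "nat \<Rightarrow> 'a \<Rightarrow> 'a"
  assumes low: "\<And>n v. (norm v)\<^sup>2 \<le> \<mu> * inner (W n v) v" and \<mu>: "\<mu> > 0"
    and conv: "convergent (\<lambda>n. inner (W n (x n - z)) (x n - z))"
  obtains M where "\<And>n. norm (x n) \<le> M"
proof -
  obtain K where K: "K > 0" "\<And>n. norm (inner (W n (x n - z)) (x n - z)) \<le> K"
    using convergent_imp_Bseq[OF conv] by (auto elim: BseqE)
  have "norm (x n) \<le> norm z + sqrt (\<mu> * K)" for n
  proof -
    have "(norm (x n - z))\<^sup>2 \<le> \<mu> * inner (W n (x n - z)) (x n - z)" by (rule low)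
    also have "\<dots> \<le> \<mu> * K" using K(2)[of n] \<mu> by (intro mult_left_mono) auto
    finally have "norm (x n - z) \<le> sqrt (\<mu> * K)" by (rule real_le_rsqrt)
    moreover have "norm (x n) \<le> norm z + norm (x n - z)" by (metis norm_triangle_sub add.commute)
    ultimately show ?thesis by simp
  qed
  thus ?thesis using that by blast
qed

lemma inner_tendsto_transfer:
  fixes x a :: "nat \<Rightarrow> 'a::real_inner"
  assumes M: "\<And>n. norm (x n) \<le> M" and a: "a \<longlonglongrightarrow> L"
    and l: "(\<lambda>n. inner (x n) (a n)) \<longlonglongrightarrow> l"
  shows "(\<lambda>n. inner (x n) L) \<longlonglongrightarrow> l"
proof -
  have "(\<lambda>n. inner (x n) (a n - L)) \<longlonglongrightarrow> 0"
  proof (rule Lim_null_comparison)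
    show "\<forall>\<^sub>F n in sequentially. norm (inner (x n) (a n - L)) \<le> \<bar>M\<bar> * norm (a n - L)"
    proof (rule always_eventually, rule allI)
      fix n
      have "norm (inner (x n) (a n - L)) \<le> norm (x n) * norm (a n - L)"
        by (simp add: Cauchy_Schwarz_ineq2)
      also have "\<dots> \<le> \<bar>M\<bar> * norm (a n - L)" using M[of n] by (intro mult_right_mono) auto
      finally show "norm (inner (x n) (a n - L)) \<le> \<bar>M\<bar> * norm (a n - L)" .
    qed
    show "(\<lambda>n. \<bar>M\<bar> * norm (a n - L)) \<longlonglongrightarrow> 0"
      using a by (intro tendsto_mult_right_zero tendsto_norm_zero) (simp add: LIM_zero)
  qed
  hence "(\<lambda>n. inner (x n) (a n) - inner (x n) (a n - L)) \<longlonglongrightarrow> l - 0" by (intro tendsto_diff l)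
  thus ?thesis by (simp add: inner_diff_right)
qed

text \<open>Polarisation: if the metric distances of x n to z1 and to z2 converge and the metrics
  converge pointwise, then the cross term <x n, W n (z2 - z1)> converges.\<close>
lemma metric_cross_term_convergent:
  fixes x :: "nat \<Rightarrow> 'a::real_inner" and W :: "nat \<Rightarrow> 'a \<Rightarrow> 'a"
  assumes lin: "\<And>n. linear (W n)" and sa: "\<And>n u v. inner (W n u) v = inner u (W n v)"
    and Wconv: "\<And>v. convergent (\<lambda>n. W n v)"
    and conv1: "convergent (\<lambda>n. inner (W n (x n - z1)) (x n - z1))"
    and conv2: "convergent (\<lambda>n. inner (W n (x n - z2)) (x n - z2))"
  shows "convergent (\<lambda>n. inner (x n) (W n (z2 - z1)))"
proof -
  define N where "N n u = inner (W n u) u" for n u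
  have Nconv: "convergent (\<lambda>n. N n u)" for u
  proof -
    obtain Lu where "(\<lambda>n. W n u) \<longlonglongrightarrow> Lu" using Wconv[of u] by (auto simp: convergent_def)
    hence "(\<lambda>n. inner (W n u) u) \<longlonglongrightarrow> inner Lu u" by (intro tendsto_intros)
    thus ?thesis unfolding N_def by (auto simp: convergent_def)
  qed
  have Nexp: "N n (a - b) = N n a - 2 * inner (W n a) b + N n b" for n a b
    using quadratic_form_expand[OF lin sa, of n a "-1" b] unfolding N_def by simp
  have polar: "inner (x n) (W n (z2 - z1)) = (N n (x n - z1) - N n (x n - z2) - N n z1 + N n z2) / 2" for n
  proof -
    have "inner (W n (x n)) z2 - inner (W n (x n)) z1 = inner (x n) (W n (z2 - z1))"
      by (simp add: sa linear_diff[OF lin] inner_diff_right)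
    thus ?thesis unfolding Nexp by simp
  qed
  obtain a1 a2 b1 b2 where "(\<lambda>n. N n (x n - z1)) \<longlonglongrightarrow> a1" "(\<lambda>n. N n (x n - z2)) \<longlonglongrightarrow> a2"
      "(\<lambda>n. N n z1) \<longlonglongrightarrow> b1" "(\<lambda>n. N n z2) \<longlonglongrightarrow> b2"
    using conv1 conv2 Nconv[of z1] Nconv[of z2] unfolding N_def convergent_def by blast
  hence "(\<lambda>n. inner (x n) (W n (z2 - z1))) \<longlonglongrightarrow> (a1 - a2 - b1 + b2) / 2"
    unfolding polar by (intro tendsto_intros) auto
  thus ?thesis by (auto simp: convergent_def)
qed

text \<open>Uniqueness of weak cluster points in Opial's lemma: by the previous lemma z1 and z2
  have the same inner product with L = lim W n (z2 - z1), which forces z1 = z2 by uniform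
  coercivity of the metrics.\<close>
lemma weak_cluster_points_unique:
  fixes x :: "nat \<Rightarrow> 'a::real_inner" and W :: "nat \<Rightarrow> 'a \<Rightarrow> 'a"
  assumes lin: "\<And>n. linear (W n)" and sa: "\<And>n u v. inner (W n u) v = inner u (W n v)"
    and low: "\<And>n v. (norm v)\<^sup>2 \<le> \<mu> * inner (W n v) v" and \<mu>: "\<mu> > 0"
    and Wconv: "\<And>v. convergent (\<lambda>n. W n v)" and M: "\<And>n. norm (x n) \<le> M"
    and conv1: "convergent (\<lambda>n. inner (W n (x n - z1)) (x n - z1))"
    and conv2: "convergent (\<lambda>n. inner (W n (x n - z2)) (x n - z2))"
    and r1: "strict_mono r1" and w1: "weakly_converges (x \<circ> r1) z1"
    and r2: "strict_mono r2" and w2: "weakly_converges (x \<circ> r2) z2"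
  shows "z1 = z2"
proof -
  define v where "v = z2 - z1"
  obtain L where L: "(\<lambda>n. W n v) \<longlonglongrightarrow> L" using Wconv[of v] by (auto simp: convergent_def)
  obtain l where "(\<lambda>n. inner (x n) (W n v)) \<longlonglongrightarrow> l"
    using metric_cross_term_convergent[OF lin sa Wconv conv1 conv2] unfolding v_def convergent_def by blast
  hence xl: "(\<lambda>n. inner (x n) L) \<longlonglongrightarrow> l" by (rule inner_tendsto_transfer[OF M L])
  have "inner z L = l" if r: "strict_mono r" and w: "weakly_converges (x \<circ> r) z" for r z
  proof -
    have "(\<lambda>k. inner (x (r k)) L) \<longlonglongrightarrow> l" using LIMSEQ_subseq_LIMSEQ[OF xl r] by (simp add: o_def)
    moreover have "(\<lambda>k. inner (x (r k)) L) \<longlonglongrightarrow> inner z L"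
      using w unfolding weakly_converges_def by (simp add: o_def)
    ultimately show ?thesis using LIMSEQ_unique by blast
  qed
  hence vL: "inner v L = 0" using r1 w1 r2 w2 unfolding v_def by (simp add: inner_diff_left)
  have "(\<lambda>n. inner (W n v) v) \<longlonglongrightarrow> inner L v" using L by (intro tendsto_intros)
  moreover have "(norm v)\<^sup>2 / \<mu> \<le> inner (W n v) v" for n
    using low[of v n] \<mu> by (simp add: field_simps)
  ultimately have "(norm v)\<^sup>2 / \<mu> \<le> inner L v" by (intro LIMSEQ_le_const) auto
  hence "(norm v)\<^sup>2 \<le> 0" using vL \<mu> by (simp add: inner_commute divide_le_0_iff)
  thus ?thesis unfolding v_def by simp
qed

lemma variable_metric_opial:
  fixes x :: "nat \<Rightarrow> 'a::{real_inner,complete_space}" and W :: "nat \<Rightarrow> 'a \<Rightarrow> 'a"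
  assumes lin: "\<And>n. linear (W n)" and sa: "\<And>n u v. inner (W n u) v = inner u (W n v)"
    and low: "\<And>n v. (norm v)\<^sup>2 \<le> \<mu> * inner (W n v) v" and \<mu>: "\<mu> > 0"
    and Wconv: "\<And>v. convergent (\<lambda>n. W n v)"
    and z0: "z0 \<in> S"
    and fejer: "\<And>z. z \<in> S \<Longrightarrow> convergent (\<lambda>n. inner (W n (x n - z)) (x n - z))"
    and cluster: "\<And>r z. strict_mono r \<Longrightarrow> weakly_converges (x \<circ> r) z \<Longrightarrow> z \<in> S"
  shows "\<exists>z\<in>S. weakly_converges x z"
proof -
  obtain M where M: "\<And>n. norm (x n) \<le> M"
    using bounded_if_metric_distance_convergent[OF low \<mu> fejer[OF z0]] by blast
  obtain r z where r: "strict_mono r" and wz: "weakly_converges (x \<circ> r) z"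
    using weakly_convergent_subsequence[of x M, OF M] by blast
  have "weakly_converges x z"
  proof (rule weakly_converges_if_unique_cluster[OF M])
    fix r' z' assume r': "strict_mono r'" and wz': "weakly_converges (x \<circ> r') z'"
    show "z' = z"
      by (rule weak_cluster_points_unique[OF lin sa low \<mu> Wconv M
            fejer[OF cluster[OF r' wz']] fejer[OF cluster[OF r wz]] r' wz' r wz])
  qed
  thus ?thesis using cluster[OF r wz] by blast
qed

section \<open>The forward-backward-forward iteration\<close>

text \<open>The arithmetic behind the Fejer inequality: the step-size condition
  gamma * beta * mu <= 1 - eps turns the estimate of the forward correction into a
  decrease proportional to the residual.\<close>
lemma fejer_arith:
  fixes Np Nx Ne Nh E g \<beta> \<mu> \<epsilon> :: real
  assumes "Np \<le> Nx - Ne + Nh" "Nh \<le> g\<^sup>2 * \<mu> * \<beta>\<^sup>2 * E" "E \<le> \<mu> * Ne"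
    "g * \<beta> * \<mu> \<le> 1 - \<epsilon>" "0 \<le> g * \<beta> * \<mu>" "0 < \<epsilon>" "\<epsilon> < 1" "\<mu> > 0" "E \<ge> 0"
  shows "Np \<le> Nx - (\<epsilon> / \<mu>) * E"
proof -
  have "(g * \<beta> * \<mu>)\<^sup>2 \<le> (1 - \<epsilon>)\<^sup>2" using assms(4,5) by (rule power_mono)
  also have "\<dots> \<le> 1 - \<epsilon>" using assms(6,7) by (simp add: power2_eq_square mult_left_le)
  finally have "(g * \<beta> * \<mu>)\<^sup>2 * E \<le> (1 - \<epsilon>) * E" using assms(9) by (rule mult_right_mono)
  moreover have "Nh * \<mu> \<le> (g * \<beta> * \<mu>)\<^sup>2 * E"
    using mult_right_mono[OF assms(2), of \<mu>] assms(8) by (simp add: power2_eq_square mult_ac)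
  moreover have "Np * \<mu> \<le> (Nx - Ne + Nh) * \<mu>" using assms(1,8) by (simp add: mult_right_mono)
  ultimately have "Np * \<mu> \<le> (Nx - (\<epsilon> / \<mu>) * E) * \<mu>"
    using assms(3,8) by (simp add: algebra_simps)
  thus ?thesis using assms(8) by simp
qed

text \<open>The setting of the main theorem.\<close>
locale fbf_iteration =
  fixes f :: "'a::{real_inner, complete_space} \<Rightarrow> ereal"
    and B :: "'a \<Rightarrow> 'a"
    and U :: "nat \<Rightarrow> 'a \<Rightarrow> 'a"
    and \<eta> \<gamma> :: "nat \<Rightarrow> real"
    and \<alpha> \<beta> \<mu> \<epsilon> :: real
    and x y p q :: "nat \<Rightarrow> 'a"
  assumes f: "proper_fun f" "lsc_fun f" "convex_fun f"
    and \<alpha>: "\<alpha> > 0" and \<beta>: "\<beta> > 0"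
    and B: "monotone_op B" "lipschitz_on \<beta> UNIV B"
    and \<eta>: "\<And>n. \<eta> n \<ge> 0" "summable \<eta>"
    and U: "\<And>n. U n \<in> P_alpha \<alpha>"
    and Ubdd: "bdd_above (range (\<lambda>n. onorm (U n)))"
    and \<mu>: "\<mu> = (SUP n. onorm (U n))"
    and Umono: "\<And>n. loewner_ge (\<lambda>z. (1 + \<eta> n) *\<^sub>R U (Suc n) z) (U n)"
    and \<epsilon>: "0 < \<epsilon>" "\<epsilon> < min 1 (1 / (\<mu> * \<beta> + 1))"
    and \<gamma>: "\<And>n. \<gamma> n \<in> {\<epsilon> .. (1 - \<epsilon>) / (\<beta> * \<mu>)}"
    and sol: "\<exists>xb. vi_solution f B xb"
    and yn: "\<And>n. y n = x n - \<gamma> n *\<^sub>R U n (B (x n))"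
    and pn: "\<And>n. p n = (ARG_MIN (\<lambda>z. f z + ereal (1 / (2 * \<gamma> n) * (M_norm (inv (U n)) (z - y n))\<^sup>2)) z. True)"
    and qn: "\<And>n. q n = p n - \<gamma> n *\<^sub>R U n (B (p n))"
    and xn: "\<And>n. x (Suc n) = x n - y n + q n"
begin

text \<open>The metric W n = inv (U n), in which the iteration is quasi-Fejer monotone.\<close>
definition W :: "nat \<Rightarrow> 'a \<Rightarrow> 'a" where "W n = inv (U n)"

lemma U_linear: "linear (U n)" by (rule P_linear[OF U \<alpha>])
lemma U_self_adjoint: "inner (U n u) v = inner u (U n v)" by (rule P_self_adjoint[OF U \<alpha>])
lemma U_nonneg: "inner (U n u) u \<ge> 0" by (rule P_nonneg[OF U \<alpha>])
lemma W_bounded_linear: "bounded_linear (W n)" unfolding W_def by (rule P_inv_bounded_linear[OF U \<alpha>])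
lemma W_linear: "linear (W n)" unfolding W_def by (rule P_inv_linear[OF U \<alpha>])
lemma W_self_adjoint: "inner (W n u) v = inner u (W n v)" unfolding W_def by (rule P_inv_self_adjoint[OF U \<alpha>])
lemma W_nonneg: "inner (W n u) u \<ge> 0" unfolding W_def by (rule P_inv_nonneg[OF U \<alpha>])
lemma U_W: "U n (W n v) = v" unfolding W_def by (rule P_inv_right[OF U \<alpha>])
lemma W_U: "W n (U n v) = v" unfolding W_def by (rule P_inv_left[OF U \<alpha>])
lemma W_norm: "norm (W n v) \<le> (1/\<alpha>) * norm v" unfolding W_def by (rule P_inv_norm[OF U \<alpha>])

lemma onorm_U_le: "onorm (U n) \<le> \<mu>" unfolding \<mu> by (rule cSUP_upper) (use Ubdd in auto)

lemma W_lower: "(norm v)\<^sup>2 \<le> \<mu> * inner (W n v) v"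
proof -
  have "(norm v)\<^sup>2 \<le> onorm (U n) * inner (W n v) v" unfolding W_def by (rule P_inv_lower[OF U \<alpha>])
  also have "\<dots> \<le> \<mu> * inner (W n v) v" by (rule mult_right_mono[OF onorm_U_le W_nonneg])
  finally show ?thesis .
qed

lemma U_upper: "inner (U n v) v \<le> \<mu> * (norm v)\<^sup>2"
proof -
  have "inner (U n v) v \<le> norm (U n v) * norm v" by (rule norm_cauchy_schwarz)
  also have "\<dots> \<le> (onorm (U n) * norm v) * norm v"
    by (rule mult_right_mono[OF onorm[OF P_bounded_linear[OF U \<alpha>]]]) simp
  also have "\<dots> \<le> (\<mu> * norm v) * norm v" by (intro mult_right_mono onorm_U_le) auto
  finally show ?thesis by (simp add: power2_eq_square mult.assoc)
qed

lemma \<epsilon>_less_1: "\<epsilon> < 1" using \<epsilon>(2) by simp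

lemma \<gamma>_ge: "\<epsilon> \<le> \<gamma> n" using \<gamma>[of n] by simp

lemma \<gamma>_pos: "\<gamma> n > 0" using \<gamma>_ge[of n] \<epsilon>(1) by simp

text \<open>The step-size interval is nonempty only if beta * mu > 0.\<close>
lemma \<beta>\<mu>_pos: "\<beta> * \<mu> > 0"
proof (rule ccontr)
  assume "\<not> \<beta> * \<mu> > 0"
  hence "(1 - \<epsilon>) / (\<beta> * \<mu>) \<le> 0" using \<epsilon>_less_1 by (simp add: divide_nonneg_nonpos)
  thus False using \<gamma>[of 0] \<epsilon>(1) by simp
qed

lemma \<mu>_pos: "\<mu> > 0" using \<beta>\<mu>_pos \<beta> by (simp add: zero_less_mult_iff)

lemma \<gamma>_small: "\<gamma> n * \<beta> * \<mu> \<le> 1 - \<epsilon>"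
  using \<gamma>[of n] \<beta>\<mu>_pos by (simp add: field_simps)

lemma B_lipschitz: "norm (B u - B v) \<le> \<beta> * norm (u - v)"
  using lipschitz_onD[OF B(2), of u v] by (simp add: dist_norm)

lemma B_monotone: "inner (u - v) (B u - B v) \<ge> 0" using B(1) unfolding monotone_op_def by blast

text \<open>Inverting U n <= (1 + eta n) U (n+1) gives the variable-metric condition on W.\<close>
lemma W_mono: "inner (W (Suc n) v) v \<le> (1 + \<eta> n) * inner (W n v) v"
proof -
  have e: "1 + \<eta> n > 0" using \<eta>(1)[of n] by simp
  have "inner ((1 / (1 + \<eta> n)) *\<^sub>R W (Suc n) v) v \<le> inner (W n v) v"
  proof (rule loewner_inverse_antimono[where A="\<lambda>z. (1 + \<eta> n) *\<^sub>R U (Suc n) z" and B="U n"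
        and WA="\<lambda>z. (1 / (1 + \<eta> n)) *\<^sub>R W (Suc n) z" and WB="W n", OF U_linear U_self_adjoint U_nonneg])
    show "inner ((1 + \<eta> n) *\<^sub>R U (Suc n) u) u \<ge> inner (U n u) u" for u
      using Umono[of n] unfolding loewner_ge_def by blast
    show "(1 + \<eta> n) *\<^sub>R U (Suc n) ((1 / (1 + \<eta> n)) *\<^sub>R W (Suc n) z) = z" for z
      using e by (simp add: linear_scale[OF U_linear] U_W)
    show "U n (W n z) = z" for z by (rule U_W)
    show "inner ((1 / (1 + \<eta> n)) *\<^sub>R W (Suc n) v) v \<ge> 0" using e W_nonneg[of "Suc n" v] by simp
  qed
  thus ?thesis using e by (simp add: field_simps)
qed

lemma W_convergent: "convergent (\<lambda>n. W n v)"
  by (rule variable_metric_convergent[OF \<eta> W_bounded_linear W_self_adjoint W_nonneg W_norm W_mono])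

text \<open>The proximal step: p n has finite value and (1 / gamma n) W n (y n - p n) is a
  subgradient of f at p n.  A solution of the inequality provides the affine minorant.\<close>
lemma prox_step:
  shows "f (p n) \<noteq> \<infinity>" "f (p n) + ereal (inner ((1 / \<gamma> n) *\<^sub>R W n (y n - p n)) (w - p n)) \<le> f w"
proof -
  obtain xb where xb: "vi_solution f B xb" using sol by blast
  have minorant: "\<And>w. ereal (inner (xb - w) (B xb)) + f xb \<le> f w"
    using xb unfolding vi_solution_def by blast
  note prox = prox_point[OF f minorant vi_solution_finite[OF f(1) xb] U \<alpha> \<gamma>_pos pn[of n]]
  show "f (p n) \<noteq> \<infinity>" by (rule prox(1))
  show "f (p n) + ereal (inner ((1 / \<gamma> n) *\<^sub>R W n (y n - p n)) (w - p n)) \<le> f w"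
    unfolding W_def by (rule prox(2))
qed

lemma x_Suc_eq: "x (Suc n) = p n + \<gamma> n *\<^sub>R U n (B (x n) - B (p n))"
  using xn[of n] yn[of n] qn[of n] by (simp add: linear_diff[OF U_linear] algebra_simps)

lemma W_y_minus_p: "W n (y n - p n) = W n (x n - p n) - \<gamma> n *\<^sub>R B (x n)"
proof -
  have "y n - p n = (x n - p n) - \<gamma> n *\<^sub>R U n (B (x n))" using yn[of n] by simp
  thus ?thesis by (simp add: linear_diff[OF W_linear] linear_scale[OF W_linear] W_U)
qed

text \<open>Subgradient inequality at p n, the inequality at a solution z and monotonicity of B
  combine into a lower bound for the W n-inner product of p n - z and x n - p n.\<close>
lemma prox_solution_ineq:
  assumes z: "vi_solution f B z"
  shows "\<gamma> n * inner (p n - z) (B (x n) - B (p n)) \<le> inner (W n (p n - z)) (x n - p n)"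
proof -
  define g where "g = \<gamma> n"
  have g: "g > 0" unfolding g_def by (rule \<gamma>_pos)
  obtain fzr where fzr: "f z = ereal fzr"
    using proper_fun_real_value[OF f(1) vi_solution_finite[OF f(1) z]] .
  obtain fpr where fpr: "f (p n) = ereal fpr" using proper_fun_real_value[OF f(1) prox_step(1)] .
  have "inner ((1/g) *\<^sub>R W n (y n - p n)) (z - p n)
      = (1/g) * inner (W n (x n - p n)) (z - p n) - inner (B (x n)) (z - p n)"
    unfolding W_y_minus_p g_def using g[unfolded g_def] by (simp add: inner_diff_left diff_divide_distrib)
  moreover have "fpr + inner ((1/g) *\<^sub>R W n (y n - p n)) (z - p n) \<le> fzr"
    using prox_step(2)[of n z] fzr fpr unfolding g_def by simp
  ultimately have subgrad: "fpr + (1/g) * inner (W n (x n - p n)) (z - p n) - inner (B (x n)) (z - p n) \<le> fzr"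
    by simp
  have "inner (z - p n) (B z) + fzr \<le> fpr"
    using z fzr fpr unfolding vi_solution_def by (metis plus_ereal.simps(1) ereal_less_eq(3))
  moreover have "inner (z - p n) (B (p n)) \<le> inner (z - p n) (B z)"
    using B_monotone[of "p n" z] by (simp add: inner_diff_left inner_diff_right inner_commute algebra_simps)
  ultimately have "(1/g) * inner (W n (x n - p n)) (z - p n) \<le> inner (z - p n) (B (x n) - B (p n))"
    using subgrad by (simp add: inner_diff_right inner_commute)
  hence "inner (W n (x n - p n)) (z - p n) \<le> g * inner (z - p n) (B (x n) - B (p n))"
    using g by (simp add: field_simps)
  moreover have "inner (W n (x n - p n)) (z - p n) = - inner (W n (p n - z)) (x n - p n)"
  proof -
    have "inner (W n (x n - p n)) (z - p n) = inner (x n - p n) (W n (z - p n))" by (rule W_self_adjoint)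
    also have "W n (z - p n) = - W n (p n - z)" using linear_neg[OF W_linear, of n "p n - z"] by simp
    finally show ?thesis by (simp add: inner_commute)
  qed
  ultimately show ?thesis unfolding g_def by (simp add: inner_diff_left right_diff_distrib)
qed

lemma fejer_step:
  assumes z: "vi_solution f B z"
  shows "inner (W n (x (Suc n) - z)) (x (Suc n) - z)
    \<le> inner (W n (x n - z)) (x n - z) - (\<epsilon> / \<mu>) * (norm (x n - p n))\<^sup>2"
proof -
  define N where "N v = inner (W n v) v" for v
  define e where "e = x n - p n"
  define d where "d = B (x n) - B (p n)"
  define h where "h = \<gamma> n *\<^sub>R U n d"
  have Wh: "W n h = \<gamma> n *\<^sub>R d" unfolding h_def by (simp add: linear_scale[OF W_linear] W_U)
  have Nx: "N (x n - z) = N (p n - z) + 2 * inner (W n (p n - z)) e + N e"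
    using quadratic_form_expand[OF W_linear W_self_adjoint, of n "p n - z" 1 e]
    unfolding N_def e_def by simp
  have Np: "N (x (Suc n) - z) = N (p n - z) + 2 * inner (W n (p n - z)) h + N h"
    using quadratic_form_expand[OF W_linear W_self_adjoint, of n "p n - z" 1 h]
    unfolding N_def h_def d_def x_Suc_eq by (simp add: algebra_simps)
  have "inner (W n (p n - z)) h = \<gamma> n * inner (p n - z) d"
    using W_self_adjoint[of n "p n - z" h] Wh by simp
  hence descent: "N (x (Suc n) - z) \<le> N (x n - z) - N e + N h"
    using Nx Np prox_solution_ineq[OF z, of n] unfolding e_def d_def by linarith
  have "N h = (\<gamma> n)\<^sup>2 * inner (U n d) d"
    unfolding N_def Wh by (simp add: h_def power2_eq_square inner_commute)
  also have "\<dots> \<le> (\<gamma> n)\<^sup>2 * (\<mu> * (\<beta> * norm e)\<^sup>2)"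
  proof -
    have "(norm d)\<^sup>2 \<le> (\<beta> * norm e)\<^sup>2" unfolding d_def e_def using B_lipschitz by (intro power_mono) auto
    hence "inner (U n d) d \<le> \<mu> * (\<beta> * norm e)\<^sup>2"
      using U_upper[of n d] \<mu>_pos by (meson mult_left_mono less_imp_le order_trans)
    thus ?thesis by (intro mult_left_mono) auto
  qed
  finally have correction: "N h \<le> (\<gamma> n)\<^sup>2 * \<mu> * \<beta>\<^sup>2 * (norm e)\<^sup>2" by (simp add: power_mult_distrib mult_ac)
  have coercive: "(norm e)\<^sup>2 \<le> \<mu> * N e" unfolding N_def by (rule W_lower)
  have "N (x (Suc n) - z) \<le> N (x n - z) - (\<epsilon> / \<mu>) * (norm e)\<^sup>2"
    by (rule fejer_arith[OF descent correction coercive \<gamma>_small])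
      (use \<gamma>_pos[of n] \<beta> \<mu>_pos \<epsilon>(1) \<epsilon>_less_1 in auto)
  thus ?thesis unfolding N_def e_def .
qed

lemma quasi_fejer_step:
  assumes z: "vi_solution f B z"
  shows "inner (W (Suc n) (x (Suc n) - z)) (x (Suc n) - z)
    \<le> (1 + \<eta> n) * inner (W n (x n - z)) (x n - z) - (\<epsilon> / \<mu>) * (norm (x n - p n))\<^sup>2"
proof -
  have "inner (W (Suc n) (x (Suc n) - z)) (x (Suc n) - z) \<le> (1 + \<eta> n) * inner (W n (x (Suc n) - z)) (x (Suc n) - z)"
    by (rule W_mono)
  also have "\<dots> \<le> (1 + \<eta> n) * (inner (W n (x n - z)) (x n - z) - (\<epsilon> / \<mu>) * (norm (x n - p n))\<^sup>2)"
    using fejer_step[OF z, of n] \<eta>(1)[of n] by (intro mult_left_mono) auto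
  also have "\<dots> \<le> (1 + \<eta> n) * inner (W n (x n - z)) (x n - z) - (\<epsilon> / \<mu>) * (norm (x n - p n))\<^sup>2"
  proof -
    have "0 \<le> \<eta> n * ((\<epsilon> / \<mu>) * (norm (x n - p n))\<^sup>2)"
      using \<eta>(1)[of n] \<epsilon>(1) \<mu>_pos by (intro mult_nonneg_nonneg) auto
    thus ?thesis by (simp only: right_diff_distrib distrib_right mult_1_left)
  qed
  finally show ?thesis .
qed

lemma metric_distance_convergent:
  assumes z: "vi_solution f B z"
  shows "convergent (\<lambda>n. inner (W n (x n - z)) (x n - z))"
  using \<epsilon>(1) \<mu>_pos
  by (intro quasi_fejer_convergent(1)[OF \<eta> _ W_nonneg _ quasi_fejer_step[OF z]]) auto

lemma x_minus_p_tendsto_zero: "(\<lambda>n. norm (x n - p n)) \<longlonglongrightarrow> 0"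
proof -
  obtain xb where xb: "vi_solution f B xb" using sol by blast
  have "summable (\<lambda>n. (norm (x n - p n))\<^sup>2)"
    using \<epsilon>(1) \<mu>_pos
    by (intro quasi_fejer_convergent(2)[OF \<eta> _ W_nonneg _ quasi_fejer_step[OF xb]]) auto
  hence "(\<lambda>n. sqrt ((norm (x n - p n))\<^sup>2)) \<longlonglongrightarrow> sqrt 0"
    by (intro tendsto_real_sqrt summable_LIMSEQ_zero)
  thus ?thesis by simp
qed

lemma p_bounded: obtains M where "\<And>n. norm (p n) \<le> M"
proof -
  obtain xb where xb: "vi_solution f B xb" using sol by blast
  obtain Mx where Mx: "\<And>n. norm (x n) \<le> Mx"
    by (rule bounded_if_metric_distance_convergent[OF W_lower \<mu>_pos metric_distance_convergent[OF xb]]) blast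
  obtain K where K: "\<And>n. norm (norm (x n - p n)) \<le> K"
    using convergent_imp_Bseq[of "\<lambda>n. norm (x n - p n)"] x_minus_p_tendsto_zero
    unfolding Bseq_def convergent_def by blast
  have "norm (p n) \<le> Mx + K" for n
    using norm_triangle_sub[of "p n" "x n"] Mx[of n] K[of n] by (simp add: norm_minus_commute)
  thus ?thesis using that by blast
qed

text \<open>The residual (1/gamma n) W n (x n - p n) - B (x n) + B (p n): by the prox step,
  residual n + B (p n) is a subgradient of f at p n, and the residual vanishes with x n - p n.\<close>
definition residual :: "nat \<Rightarrow> 'a" where
  "residual n = (1 / \<gamma> n) *\<^sub>R W n (x n - p n) - B (x n) + B (p n)"

lemma residual_bound: "norm (residual n) \<le> (1 / (\<epsilon> * \<alpha>) + \<beta>) * norm (x n - p n)"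
proof -
  have "norm ((1 / \<gamma> n) *\<^sub>R W n (x n - p n)) = (1 / \<gamma> n) * norm (W n (x n - p n))"
    using \<gamma>_pos[of n] by simp
  also have "\<dots> \<le> (1 / \<gamma> n) * ((1 / \<alpha>) * norm (x n - p n))"
    using \<gamma>_pos[of n] W_norm by (intro mult_left_mono) auto
  also have "\<dots> \<le> (1 / \<epsilon>) * ((1 / \<alpha>) * norm (x n - p n))"
    using \<gamma>_ge[of n] \<epsilon>(1) \<alpha> by (intro mult_right_mono) (auto simp: frac_le)
  finally have "norm ((1 / \<gamma> n) *\<^sub>R W n (x n - p n)) \<le> (1 / (\<epsilon> * \<alpha>)) * norm (x n - p n)" by simp
  moreover have "norm (B (p n) - B (x n)) \<le> \<beta> * norm (x n - p n)"
    using B_lipschitz[of "p n" "x n"] by (simp add: norm_minus_commute)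
  moreover have "norm (residual n) \<le> norm ((1 / \<gamma> n) *\<^sub>R W n (x n - p n)) + norm (B (p n) - B (x n))"
    unfolding residual_def by (metis add_diff_eq diff_add_eq norm_triangle_ineq)
  ultimately show ?thesis by (simp add: algebra_simps)
qed

text \<open>Per-step Minty inequality: monotonicity of B moves B (p n) to B w.\<close>
lemma prox_minty_ineq:
  assumes fw: "f w = ereal fw"
  shows "f (p n) \<le> ereal (fw - inner (residual n) (w - p n) + inner (B w) (w - p n))"
proof -
  obtain fpr where fpr: "f (p n) = ereal fpr" using proper_fun_real_value[OF f(1) prox_step(1)] .
  have "(1 / \<gamma> n) *\<^sub>R W n (y n - p n) = residual n - B (p n)"
    unfolding W_y_minus_p residual_def using \<gamma>_pos[of n] by (simp add: algebra_simps)
  hence "fpr + inner (residual n) (w - p n) - inner (B (p n)) (w - p n) \<le> fw"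
    using prox_step(2)[of n w] fpr fw by (simp add: inner_diff_left)
  moreover have "inner (B (p n)) (w - p n) \<le> inner (B w) (w - p n)"
    using B_monotone[of w "p n"] by (simp add: inner_diff_right inner_commute)
  ultimately show ?thesis using fpr by simp
qed

text \<open>Every weak cluster point z of (x n) solves the variational inequality: passing to the
  limit in the per-step Minty inequality along the subsequence (with weak lower
  semicontinuity of f) gives Minty's inequality at z.\<close>
lemma weak_cluster_point_solution:
  assumes r: "strict_mono r" and wz: "weakly_converges (x \<circ> r) z"
  shows "vi_solution f B z"
proof -
  have xp: "(\<lambda>k. norm (x (r k) - p (r k))) \<longlonglongrightarrow> 0"
    using LIMSEQ_subseq_LIMSEQ[OF x_minus_p_tendsto_zero r] by (simp add: o_def)
  have wp: "weakly_converges (p \<circ> r) z"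
    by (rule weakly_converges_if_close[OF wz]) (use xp in \<open>simp add: o_def\<close>)
  have res: "(\<lambda>k. norm (residual (r k))) \<longlonglongrightarrow> 0"
    by (rule Lim_null_comparison[OF _ tendsto_mult_right_zero[where c="1 / (\<epsilon> * \<alpha>) + \<beta>", OF xp]]) (simp add: residual_bound)
  obtain Mp where Mp: "\<And>n. norm (p n) \<le> Mp" using p_bounded by blast
  have minty: "f z \<le> ereal (fw + inner (B w) (w - z))" if fw: "f w = ereal fw" for w fw
  proof -
    have "(\<lambda>k. inner (residual (r k)) (w - p (r k))) \<longlonglongrightarrow> 0"
    proof (rule Lim_null_comparison)
      show "\<forall>\<^sub>F k in sequentially. norm (inner (residual (r k)) (w - p (r k)))
          \<le> norm (residual (r k)) * (norm w + Mp)"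
      proof (rule always_eventually, rule allI)
        fix k
        have "norm (inner (residual (r k)) (w - p (r k))) \<le> norm (residual (r k)) * norm (w - p (r k))"
          by (simp add: Cauchy_Schwarz_ineq2)
        also have "\<dots> \<le> norm (residual (r k)) * (norm w + Mp)"
          using norm_triangle_ineq4[of w "p (r k)"] Mp[of "r k"] by (intro mult_left_mono) auto
        finally show "norm (inner (residual (r k)) (w - p (r k))) \<le> norm (residual (r k)) * (norm w + Mp)" .
      qed
      show "(\<lambda>k. norm (residual (r k)) * (norm w + Mp)) \<longlonglongrightarrow> 0" by (rule tendsto_mult_left_zero[OF res])
    qed
    moreover have "(\<lambda>k. inner (B w) (w - p (r k))) \<longlonglongrightarrow> inner (B w) (w - z)"
      using wp unfolding weakly_converges_def
      by (simp add: o_def inner_diff_right inner_commute[of "B w"] tendsto_diff)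
    ultimately have "(\<lambda>k. fw - inner (residual (r k)) (w - p (r k)) + inner (B w) (w - p (r k)))
        \<longlonglongrightarrow> fw - 0 + inner (B w) (w - z)"
      by (intro tendsto_add tendsto_diff tendsto_const)
    from weakly_lsc[OF f wp this] show ?thesis using prox_minty_ineq[OF fw] by (simp add: o_def)
  qed
  obtain xb fxr where "f xb = ereal fxr"
    using sol proper_fun_real_value[OF f(1) vi_solution_finite[OF f(1)]] by metis
  hence "f z \<noteq> \<infinity>" using minty by (metis PInfty_neq_ereal(1) ereal_infty_less_eq(1))
  then obtain fzr where "f z = ereal fzr" using proper_fun_real_value[OF f(1)] by blast
  thus ?thesis using vi_solution_if_minty[OF f(1) f(3) B_lipschitz minty] by blast
qed

theorem weakly_converges_to_solution: "\<exists>xb. vi_solution f B xb \<and> weakly_converges x xb"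
proof -
  obtain xb where "vi_solution f B xb" using sol by blast
  hence "\<exists>z\<in>{z. vi_solution f B z}. weakly_converges x z"
    by (intro variable_metric_opial[OF W_linear W_self_adjoint W_lower \<mu>_pos W_convergent])
      (auto intro: metric_distance_convergent weak_cluster_point_solution)
  thus ?thesis by blast
qed

end

theorem mainTheorem2:
  fixes f :: "'a::{real_inner, complete_space} \<Rightarrow> ereal"
    and B :: "'a \<Rightarrow> 'a"
    and U :: "nat \<Rightarrow> 'a \<Rightarrow> 'a"
    and \<eta> \<gamma> :: "nat \<Rightarrow> real"
    and \<alpha> \<beta> \<mu> \<epsilon> :: real
    and x y p q :: "nat \<Rightarrow> 'a"
    and x0 :: 'a
  assumes f: "proper_fun f" "lsc_fun f" "convex_fun f"
    and \<alpha>: "\<alpha> > 0" and \<beta>: "\<beta> > 0"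
    and B: "monotone_op B" "lipschitz_on \<beta> UNIV B"
    and \<eta>: "\<And>n. \<eta> n \<ge> 0" "summable \<eta>"
    and U: "\<And>n. U n \<in> P_alpha \<alpha>"
    and Ubdd: "bdd_above (range (\<lambda>n. onorm (U n)))"
    and \<mu>: "\<mu> = (SUP n. onorm (U n))"
    and Umono: "\<And>n. loewner_ge (\<lambda>z. (1 + \<eta> n) *\<^sub>R U (Suc n) z) (U n)"
    and \<epsilon>: "0 < \<epsilon>" "\<epsilon> < min 1 (1 / (\<mu> * \<beta> + 1))"
    and \<gamma>: "\<And>n. \<gamma> n \<in> {\<epsilon> .. (1 - \<epsilon>) / (\<beta> * \<mu>)}"
    and sol: "\<exists>xb. vi_solution f B xb"
    and x0: "x 0 = x0"
    and yn: "\<And>n. y n = x n - \<gamma> n *\<^sub>R U n (B (x n))"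
    and pn: "\<And>n. p n = (ARG_MIN (\<lambda>z. f z + ereal (1 / (2 * \<gamma> n) * (M_norm (inv (U n)) (z - y n))\<^sup>2)) z. True)"
    and qn: "\<And>n. q n = p n - \<gamma> n *\<^sub>R U n (B (p n))"
    and xn: "\<And>n. x (Suc n) = x n - y n + q n"
  shows "\<exists>xb. vi_solution f B xb \<and> weakly_converges x xb"
proof -
  interpret fbf_iteration f B U \<eta> \<gamma> \<alpha> \<beta> \<mu> \<epsilon> x y p q
    by (unfold_locales; fact f \<alpha> \<beta> B \<eta> U Ubdd \<mu> Umono \<epsilon> \<gamma> sol yn pn qn xn)
  show ?thesis by (rule weakly_converges_to_solution)
qed


end
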